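(* Let $R$ be a commutative ring with $\mathbb{Q}\subseteq R$, $\mathcal{A}$ a commutative unital $R$-algebra, and $\mathcal{E}$ a finitely generated projective $\mathcal{A}$-module with a symmetric, strongly nondegenerate, full $\mathcal{A}$-bilinear form $\langle\cdot,\cdot\rangle$. Let $[\cdot,\cdot]$ be the bracket on $\mathcal{C}^\bullet(\mathcal{E})$ described in the context. Then there exists a unique associative, graded commutative, $R$-bilinear product $\wedge$ of degree zero on $\mathcal{C}^\bullet(\mathcal{E})$ with the following properties: - $a\wedge b=ab=b\wedge a$ for $a,b\in\mathcal{A}$; - $a\wedge x=ax=x\wedge a$ for $a\in\mathcal{A}$, $x\in\mathcal{E}$; - $[\mathsf{C}_1\wedge\mathsf{C}_2,x]=(-1)^s[\mathsf{C}_1,x]\wedge\mathsf{C}_2+\mathsf{C}_1\wedge[\mathsf{C}_2,x]$ for all $\mathsf{C}_1\in\mathcal{C}^r(\mathcal{E})$, $\mathsf{C}_2\in\mathcal{C}^s(\mathcal{E})$, $x\in\mathcal{E}$.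
   Context: Strongly nondegenerate: $\mathcal{E}\to\operatorname{Hom}_{\mathcal{A}}(\mathcal{E},\mathcal{A})$ is an isomorphism. Full: every $a\in\mathcal{A}$ is a finite sum $\sum_i\langle x_i,y_i\rangle$. $\operatorname{Der}(\mathcal{A})$: $R$-linear derivations of $\mathcal{A}$. $\mathcal{C}^0(\mathcal{E})=\mathcal{A}$ and $\mathcal{C}^1(\mathcal{E})=\mathcal{E}$. For $r\ge2$, $\mathcal{C}^r(\mathcal{E})$ is the set of $\mathsf{C}\in\operatorname{Hom}_R(\mathcal{E}^{\otimes_R(r-1)},\mathcal{E})$ admitting an $R$-multilinear symbol $\sigma_{\mathsf{C}}:\mathcal{E}^{\otimes(r-2)}\to\operatorname{Der}(\mathcal{A})$ with two properties: (1) $\sigma_{\mathsf{C}}(x_1,\dots,x_{r-2})\langle u,w\rangle=\langle\mathsf{C}(x_1,\dots,x_{r-2},u),w\rangle+\langle u,\mathsf{C}(x_1,\dots,x_{r-2},w)\rangle$; (2) for $r\ge3$ and $1\le i\le r-2$, $\langle\mathsf{C}(\dots,x_i,x_{i+1},\dots)+\mathsf{C}(\dots,x_{i+1},x_i,\dots),u\rangle=\sigma_{\mathsf{C}}(x_1,\dots,\widehat{x_i},\widehat{x_{i+1}},\dots,x_{r-1},u)\langle x_i,x_{i+1}\rangle$. $\mathcal{C}^\bullet(\mathcal{E})=\bigoplus_r\mathcal{C}^r(\mathcal{E})$. $i_x\mathsf{C}$ inserts $x$ into the first argument of $\mathsf{C}\in\mathcal{C}^r$, $r\ge2$. $[\cdot,\cdot]$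 is the unique $R$-bilinear graded skew-symmetric map $\mathcal{C}^r\times\mathcal{C}^s\to\mathcal{C}^{r+s-2}$ with: - $[a,b]=0$ and $[a,x]=0=[x,a]$; - $[x,y]=\langle x,y\rangle$; - $[\mathsf{D},a]=\sigma_{\mathsf{D}}(a)=-[a,\mathsf{D}]$ for $\mathsf{D}\in\mathcal{C}^2$; - $[\mathsf{C},x]=i_x\mathsf{C}=(-1)^{r+1}[x,\mathsf{C}]$ for $\mathsf{C}\in\mathcal{C}^r$ with $r\ge2$; - $[[\mathsf{C}_1,\mathsf{C}_2],x]=(-1)^s[[\mathsf{C}_1,x],\mathsf{C}_2]+[\mathsf{C}_1,[\mathsf{C}_2,x]]$. *)

theory Defs
  imports Complex_Main
begin

definition ring_hom_fn :: "('r::comm_ring_1 \<Rightarrow> 'a::comm_ring_1) \<Rightarrow> bool" where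
  "ring_hom_fn f \<longleftrightarrow> f 1 = 1 \<and> (\<forall>x y. f (x + y) = f x + f y) \<and> (\<forall>x y. f (x * y) = f x * f y)"

(* E finitely generated projective over A: a direct summand of some A^n, i.e. an
   A-linear p : E -> A^n and an A-linear s : A^n -> E (s v = sum v_i e_i) with s o p = id. *)
definition fg_projective :: "('a::comm_ring_1 \<Rightarrow> 'e::ab_group_add \<Rightarrow> 'e) \<Rightarrow> bool" where
  "fg_projective sm \<longleftrightarrow> (\<exists>(n::nat) (e::nat \<Rightarrow> 'e) (p::'e \<Rightarrow> nat \<Rightarrow> 'a).
      (\<forall>x y i. p (x + y) i = p x i + p y i) \<and> (\<forall>a x i. p (sm a x) i = a * p x i) \<and>
      (\<forall>x. (\<Sum>i<n. sm (p x i) (e i)) = x))"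

definition sym_bilinear :: "('a::comm_ring_1 \<Rightarrow> 'e::ab_group_add \<Rightarrow> 'e) \<Rightarrow> ('e \<Rightarrow> 'e \<Rightarrow> 'a) \<Rightarrow> bool" where
  "sym_bilinear sm B \<longleftrightarrow> (\<forall>x y. B x y = B y x) \<and>
     (\<forall>x y z. B (x + y) z = B x z + B y z) \<and> (\<forall>a x y. B (sm a x) y = a * B x y) \<and>
     (\<forall>x y z. B x (y + z) = B x y + B x z) \<and> (\<forall>a x y. B x (sm a y) = a * B x y)"

definition strongly_nondeg :: "('a::comm_ring_1 \<Rightarrow> 'e::ab_group_add \<Rightarrow> 'e) \<Rightarrow> ('e \<Rightarrow> 'e \<Rightarrow> 'a) \<Rightarrow> bool" where
  "strongly_nondeg sm B \<longleftrightarrow> bij_betw B UNIV {f. module_hom sm (*) f}"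

definition full_form :: "('e \<Rightarrow> 'e \<Rightarrow> 'a::comm_ring_1) \<Rightarrow> bool" where
  "full_form B \<longleftrightarrow> (\<forall>a. \<exists>ps. a = sum_list (map (\<lambda>(x, y). B x y) ps))"

definition is_der :: "('r::comm_ring_1 \<Rightarrow> 'a::comm_ring_1) \<Rightarrow> ('a \<Rightarrow> 'a) \<Rightarrow> bool" where
  "is_der \<iota> D \<longleftrightarrow> (\<forall>a b. D (a + b) = D a + D b) \<and> (\<forall>k a. D (\<iota> k * a) = \<iota> k * D a) \<and>
     (\<forall>a b. D (a * b) = a * D b + D a * b)"

definition multilin :: "('r \<Rightarrow> 'b::ab_group_add \<Rightarrow> 'b) \<Rightarrow> ('r \<Rightarrow> 'e::ab_group_add \<Rightarrow> 'e) \<Rightarrow> nat \<Rightarrow> ('e list \<Rightarrow> 'b) \<Rightarrow> bool" where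
  "multilin scB scE n f \<longleftrightarrow> (\<forall>xs i u v k. length xs = n \<longrightarrow> i < n \<longrightarrow>
      f (xs[i := u + v]) = f (xs[i := u]) + f (xs[i := v]) \<and>
      f (xs[i := scE k u]) = scB k (f (xs[i := u])))"

(* C^r(E) for r >= 2: R-multilinear maps E^(r-1) -> E (zero on lists of other length)
   admitting a symbol with properties (1) and (2). *)
definition cochain :: "('r::comm_ring_1 \<Rightarrow> 'a::comm_ring_1) \<Rightarrow> ('a \<Rightarrow> 'e::ab_group_add \<Rightarrow> 'e) \<Rightarrow>
    ('e \<Rightarrow> 'e \<Rightarrow> 'a) \<Rightarrow> nat \<Rightarrow> ('e list \<Rightarrow> 'e) \<Rightarrow> bool" where
  "cochain \<iota> sm B r C \<longleftrightarrow> 2 \<le> r \<and> (\<forall>xs. length xs \<noteq> r - 1 \<longrightarrow> C xs = 0) \<and>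
     multilin (\<lambda>k y. sm (\<iota> k) y) (\<lambda>k y. sm (\<iota> k) y) (r - 1) C \<and>
     (\<exists>\<sigma> :: 'e list \<Rightarrow> 'a \<Rightarrow> 'a.
        (\<forall>a. multilin (\<lambda>k b. \<iota> k * b) (\<lambda>k y. sm (\<iota> k) y) (r - 2) (\<lambda>xs. \<sigma> xs a)) \<and>
        (\<forall>xs. length xs = r - 2 \<longrightarrow> is_der \<iota> (\<sigma> xs)) \<and>
        (\<forall>xs u w. length xs = r - 2 \<longrightarrow>
            \<sigma> xs (B u w) = B (C (xs @ [u])) w + B u (C (xs @ [w]))) \<and>
        (\<forall>xs i u. length xs = r - 1 \<longrightarrow> i + 1 < r - 1 \<longrightarrow>
            B (C xs + C (xs[i := xs ! (i + 1), i + 1 := xs ! i])) u =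
            \<sigma> (take i xs @ drop (i + 2) xs @ [u]) (B (xs ! i) (xs ! (i + 1)))))"

(* An element of C^*(E) = A (+) E (+) (+)_{r>=2} C^r(E), as (a, x, c) with c r in C^r. *)
type_synonym ('a, 'e) cdot = "'a \<times> 'e \<times> (nat \<Rightarrow> 'e list \<Rightarrow> 'e)"

definition Cdot :: "('r::comm_ring_1 \<Rightarrow> 'a::comm_ring_1) \<Rightarrow> ('a \<Rightarrow> 'e::ab_group_add \<Rightarrow> 'e) \<Rightarrow>
    ('e \<Rightarrow> 'e \<Rightarrow> 'a) \<Rightarrow> ('a, 'e) cdot set" where
  "Cdot \<iota> sm B = {(a, x, c). c 0 = (\<lambda>_. 0) \<and> c 1 = (\<lambda>_. 0) \<and>
      (\<forall>r\<ge>2. cochain \<iota> sm B r (c r)) \<and> finite {r. c r \<noteq> (\<lambda>_. 0)}}"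

definition homog :: "('r::comm_ring_1 \<Rightarrow> 'a::comm_ring_1) \<Rightarrow> ('a \<Rightarrow> 'e::ab_group_add \<Rightarrow> 'e) \<Rightarrow>
    ('e \<Rightarrow> 'e \<Rightarrow> 'a) \<Rightarrow> nat \<Rightarrow> ('a, 'e) cdot \<Rightarrow> bool" where
  "homog \<iota> sm B r u \<longleftrightarrow> u \<in> Cdot \<iota> sm B \<and>
     (case u of (a, x, c) \<Rightarrow> (r \<noteq> 0 \<longrightarrow> a = 0) \<and> (r \<noteq> 1 \<longrightarrow> x = 0) \<and>
        (\<forall>r'. r' \<noteq> r \<longrightarrow> c r' = (\<lambda>_. 0)))"

definition cadd :: "('a::comm_ring_1, 'e::ab_group_add) cdot \<Rightarrow> ('a, 'e) cdot \<Rightarrow> ('a, 'e) cdot" where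
  "cadd u v = (case u of (a, x, c) \<Rightarrow> case v of (b, y, d) \<Rightarrow> (a + b, x + y, \<lambda>r xs. c r xs + d r xs))"

definition csc :: "('r::comm_ring_1 \<Rightarrow> 'a::comm_ring_1) \<Rightarrow> ('a \<Rightarrow> 'e::ab_group_add \<Rightarrow> 'e) \<Rightarrow>
    'r \<Rightarrow> ('a, 'e) cdot \<Rightarrow> ('a, 'e) cdot" where
  "csc \<iota> sm k u = (case u of (a, x, c) \<Rightarrow> (\<iota> k * a, sm (\<iota> k) x, \<lambda>r xs. sm (\<iota> k) (c r xs)))"

definition cA :: "'a::comm_ring_1 \<Rightarrow> ('a, 'e::ab_group_add) cdot" where
  "cA a = (a, 0, \<lambda>_ _. 0)"

definition cE :: "'e::ab_group_add \<Rightarrow> ('a::comm_ring_1, 'e) cdot" where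
  "cE x = (0, x, \<lambda>_ _. 0)"

(* The bracket [u, x] with x in E, extended additively:
   [a,x] = 0, [y,x] = <y,x>, [C,x] = i_x C (x inserted in the first argument). *)
definition cbrx :: "('e::ab_group_add \<Rightarrow> 'e \<Rightarrow> 'a::comm_ring_1) \<Rightarrow> ('a, 'e) cdot \<Rightarrow> 'e \<Rightarrow> ('a, 'e) cdot" where
  "cbrx B u x = (case u of (a, y, c) \<Rightarrow>
      (B y x, c 2 [x], \<lambda>r xs. if r < 2 then 0 else c (r + 1) (x # xs)))"

definition is_wedge :: "('r::comm_ring_1 \<Rightarrow> 'a::comm_ring_1) \<Rightarrow> ('a \<Rightarrow> 'e::ab_group_add \<Rightarrow> 'e) \<Rightarrow>
    ('e \<Rightarrow> 'e \<Rightarrow> 'a) \<Rightarrow> (('a, 'e) cdot \<Rightarrow> ('a, 'e) cdot \<Rightarrow> ('a, 'e) cdot) \<Rightarrow> bool" where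
  "is_wedge \<iota> sm B W \<longleftrightarrow>
     (\<forall>u\<in>Cdot \<iota> sm B. \<forall>v\<in>Cdot \<iota> sm B. W u v \<in> Cdot \<iota> sm B) \<and>
     (\<forall>u\<in>Cdot \<iota> sm B. \<forall>v\<in>Cdot \<iota> sm B. \<forall>w\<in>Cdot \<iota> sm B.
        W (cadd u v) w = cadd (W u w) (W v w) \<and> W w (cadd u v) = cadd (W w u) (W w v)) \<and>
     (\<forall>k. \<forall>u\<in>Cdot \<iota> sm B. \<forall>v\<in>Cdot \<iota> sm B.
        W (csc \<iota> sm k u) v = csc \<iota> sm k (W u v) \<and> W u (csc \<iota> sm k v) = csc \<iota> sm k (W u v)) \<and>
     (\<forall>r s u v. homog \<iota> sm B r u \<longrightarrow> homog \<iota> sm B s v \<longrightarrow> homog \<iota> sm B (r + s) (W u v)) \<and>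
     (\<forall>u\<in>Cdot \<iota> sm B. \<forall>v\<in>Cdot \<iota> sm B. \<forall>w\<in>Cdot \<iota> sm B. W (W u v) w = W u (W v w)) \<and>
     (\<forall>r s u v. homog \<iota> sm B r u \<longrightarrow> homog \<iota> sm B s v \<longrightarrow>
        W u v = csc \<iota> sm ((-1) ^ (r * s)) (W v u)) \<and>
     (\<forall>a b. W (cA a) (cA b) = cA (a * b) \<and> W (cA b) (cA a) = cA (a * b)) \<and>
     (\<forall>a x. W (cA a) (cE x) = cE (sm a x) \<and> W (cE x) (cA a) = cE (sm a x)) \<and>
     (\<forall>r s u v x. homog \<iota> sm B r u \<longrightarrow> homog \<iota> sm B s v \<longrightarrow>
        cbrx B (W u v) x = cadd (csc \<iota> sm ((-1) ^ s) (W (cbrx B u x) v)) (W u (cbrx B v x)))"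

end

theory Submission
  imports Defs
begin

text \<open>
  An element of \<open>C\<^sup>n(E)\<close> is determined by its \<open>A\<close>-valued \<open>n\<close>-form
  \<open>(y1, \<dots>, yn) \<mapsto> \<langle>C(y1, \<dots>, y(n-1)), yn\<rangle>\<close>, because the pairing is strongly nondegenerate,
  and a form comes from a cochain iff it is \<open>R\<close>-multilinear, \<open>A\<close>-linear in its last argument and
  has a derivation-valued symbol. Inserting \<open>x\<close> into the first slot of a cochain fixes the first
  argument of its form. So the wedge product is the signed shuffle product of forms, defined by
  recursion on the first argument: it goes either to the first factor, passing the \<open>s\<close> arguments
  of the second one (whence the sign \<open>(-1)\<^sup>s\<close>), or to the second factor. The Leibniz rule for
  \<open>[\<cdot>, x]\<close> is then the recursion equation itself; associativity and graded commutativity are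
  the familiar properties of shuffles, and symbols are carried along. Uniqueness follows by
  induction on the total degree, since an element of positive degree is determined by its
  brackets with all \<open>x \<in> E\<close>.
\<close>

fun shuffle :: "nat \<Rightarrow> nat \<Rightarrow> ('e list \<Rightarrow> 'a::comm_ring_1) \<Rightarrow> ('e list \<Rightarrow> 'a) \<Rightarrow> 'e list \<Rightarrow> 'a" where
  "shuffle r s f g [] = (if r = 0 \<and> s = 0 then f [] * g [] else 0)"
| "shuffle r s f g (y # ys) =
     (if 0 < r then (-1) ^ s * shuffle (r - 1) s (\<lambda>zs. f (y # zs)) g ys else 0) +
     (if 0 < s then shuffle r (s - 1) f (\<lambda>zs. g (y # zs)) ys else 0)"

lemma shuffle_cong:
  "(\<And>zs. length zs = r \<Longrightarrow> f zs = f' zs) \<Longrightarrow> (\<And>zs. length zs = s \<Longrightarrow> g zs = g' zs) \<Longrightarrow>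
   shuffle r s f g ys = shuffle r s f' g' ys"
proof (induction ys arbitrary: r s f g f' g')
  case Nil then show ?case by auto
next
  case (Cons y ys)
  have "0 < r \<Longrightarrow> shuffle (r - 1) s (\<lambda>zs. f (y # zs)) g ys = shuffle (r - 1) s (\<lambda>zs. f' (y # zs)) g' ys"
    and "0 < s \<Longrightarrow> shuffle r (s - 1) f (\<lambda>zs. g (y # zs)) ys = shuffle r (s - 1) f' (\<lambda>zs. g' (y # zs)) ys"
    by (rule Cons.IH; use Cons.prems in auto)+
  then show ?case by (cases r; cases s) simp_all
qed

lemma shuffle_add_left: "shuffle r s (\<lambda>zs. f zs + f' zs) g ys = shuffle r s f g ys + shuffle r s f' g ys"
  by (induction ys arbitrary: r s f f' g) (auto simp: algebra_simps)

lemma shuffle_add_right: "shuffle r s f (\<lambda>zs. g zs + g' zs) ys = shuffle r s f g ys + shuffle r s f g' ys"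
  by (induction ys arbitrary: r s f g g') (auto simp: algebra_simps)

lemma shuffle_mult_left: "shuffle r s (\<lambda>zs. c * f zs) g ys = c * shuffle r s f g ys"
  by (induction ys arbitrary: r s f g) (auto simp: algebra_simps)

lemma shuffle_mult_right: "shuffle r s f (\<lambda>zs. c * g zs) ys = c * shuffle r s f g ys"
  by (induction ys arbitrary: r s f g) (auto simp: algebra_simps)

lemma shuffle_minus_left: "shuffle r s (\<lambda>zs. - f zs) g ys = - shuffle r s f g ys"
  using shuffle_mult_left[of r s "-1" f g ys] by simp

lemma shuffle_minus_right: "shuffle r s f (\<lambda>zs. - g zs) ys = - shuffle r s f g ys"
  using shuffle_mult_right[of r s f "-1" g ys] by simp

lemma shuffle_diff_left: "shuffle r s (\<lambda>zs. f zs - f' zs) g ys = shuffle r s f g ys - shuffle r s f' g ys"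
  using shuffle_add_left[of r s f "\<lambda>zs. - f' zs" g ys] by (simp add: shuffle_minus_left)

lemma shuffle_diff_right: "shuffle r s f (\<lambda>zs. g zs - g' zs) ys = shuffle r s f g ys - shuffle r s f g' ys"
  using shuffle_add_right[of r s f g "\<lambda>zs. - g' zs" ys] by (simp add: shuffle_minus_right)

lemma shuffle_zero_left: "(\<And>zs. length zs = r \<Longrightarrow> f zs = 0) \<Longrightarrow> shuffle r s f g ys = 0"
  using shuffle_cong[of r f "\<lambda>zs. 0" s g g ys] shuffle_mult_left[of r s 0 f g ys] by simp

lemma shuffle_zero_right: "(\<And>zs. length zs = s \<Longrightarrow> g zs = 0) \<Longrightarrow> shuffle r s f g ys = 0"
  using shuffle_cong[of r f f s g "\<lambda>zs. 0" ys] shuffle_mult_right[of r s f 0 g ys] by simp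

lemma shuffle_commute: "shuffle r s f g ys = (-1) ^ (r * s) * shuffle s r g f ys"
proof (induction ys arbitrary: r s f g)
  case Nil then show ?case by (auto simp: mult.commute)
next
  case (Cons y ys)
  let ?f = "\<lambda>zs. f (y # zs)" and ?g = "\<lambda>zs. g (y # zs)"
  have left: "(-1) ^ s * shuffle (r - 1) s ?f g ys = (-1) ^ (r * s) * shuffle s (r - 1) g ?f ys"
    if "0 < r"
    using that Cons.IH[of "r - 1" s] by (cases r) (simp_all add: power_add)
  have right: "shuffle r (s - 1) f ?g ys = (-1) ^ (r * s) * ((-1) ^ r * shuffle (s - 1) r ?g f ys)"
    if "0 < s"
    using that Cons.IH[of r "s - 1"] by (cases s) (simp_all add: power_add mult_ac)
  show ?case
    using left right by (cases "0 < r"; cases "0 < s") (simp_all add: distrib_left add.commute)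
qed

lemma shuffle_assoc: "shuffle (r + s) t (shuffle r s f g) h ys = shuffle r (s + t) f (shuffle s t g h) ys"
proof (induction ys arbitrary: r s t f g h)
  case Nil then show ?case by auto
next
  case (Cons y ys)
  show ?case
    using Cons.IH[of "r - 1" s t "\<lambda>zs. f (y # zs)" g h] Cons.IH[of r "s - 1" t f "\<lambda>zs. g (y # zs)" h]
      Cons.IH[of r s "t - 1" f g "\<lambda>zs. h (y # zs)"]
    by (cases r; cases s; cases t)
      (simp_all add: shuffle_add_left shuffle_add_right shuffle_mult_left shuffle_mult_right
        shuffle_minus_left shuffle_minus_right shuffle_diff_left shuffle_diff_right algebra_simps power_add)
qed

definition swap_at :: "nat \<Rightarrow> 'e list \<Rightarrow> 'e list" where
  "swap_at i ys = ys[i := ys ! (i + 1), i + 1 := ys ! i]"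

definition drop_pair_at :: "nat \<Rightarrow> 'e list \<Rightarrow> 'e list" where
  "drop_pair_at i ys = take i ys @ drop (i + 2) ys"

lemma swap_at_Cons: "swap_at (Suc i) (y # ys) = y # swap_at i ys"
  by (simp add: swap_at_def)

lemma drop_pair_at_Cons: "drop_pair_at (Suc i) (y # ys) = y # drop_pair_at i ys"
  by (simp add: drop_pair_at_def)

lemma swap_at_snoc: "i + 1 < length xs \<Longrightarrow> swap_at i (xs @ [y]) = swap_at i xs @ [y]"
  by (simp add: swap_at_def list_update_append nth_append)

lemma drop_pair_at_snoc: "i + 1 < length xs \<Longrightarrow> drop_pair_at i (xs @ [y]) = drop_pair_at i xs @ [y]"
  by (simp add: drop_pair_at_def)

lemma swap_at_last_pair: "length zs = m \<Longrightarrow> swap_at m (zs @ [u, w]) = zs @ [w, u]"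
  by (simp add: swap_at_def list_update_append nth_append)

lemma drop_pair_at_last_pair: "length zs = m \<Longrightarrow> drop_pair_at m (zs @ [u, w]) = zs"
  by (simp add: drop_pair_at_def)

text \<open>Properties (1) and (2) of a cochain become a single condition on its form \<open>f\<close>.\<close>

definition has_symbol ::
    "('e \<Rightarrow> 'e \<Rightarrow> 'a::comm_ring_1) \<Rightarrow> nat \<Rightarrow> ('e list \<Rightarrow> 'a) \<Rightarrow> ('e list \<Rightarrow> 'a \<Rightarrow> 'a) \<Rightarrow> bool" where
  "has_symbol P r f \<sigma> \<longleftrightarrow> (\<forall>ys i. length ys = r \<longrightarrow> i + 1 < r \<longrightarrow>
      f ys + f (swap_at i ys) = \<sigma> (drop_pair_at i ys) (P (ys ! i) (ys ! (i + 1))))"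

definition shuffle_symbol :: "nat \<Rightarrow> nat \<Rightarrow> ('e list \<Rightarrow> 'a::comm_ring_1) \<Rightarrow> ('e list \<Rightarrow> 'a) \<Rightarrow>
    ('e list \<Rightarrow> 'a \<Rightarrow> 'a) \<Rightarrow> ('e list \<Rightarrow> 'a \<Rightarrow> 'a) \<Rightarrow> 'e list \<Rightarrow> 'a \<Rightarrow> 'a" where
  "shuffle_symbol r s f g \<sigma> \<tau> zs a =
     (if 2 \<le> r then shuffle (r - 2) s (\<lambda>ws. \<sigma> ws a) g zs else 0) +
     (if 2 \<le> s then shuffle r (s - 2) f (\<lambda>ws. \<tau> ws a) zs else 0)"

lemma has_symbol_Cons:
  fixes f :: "'e list \<Rightarrow> 'a::comm_ring_1"
  assumes "has_symbol P r f \<sigma>"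
  shows "has_symbol P (r - 1) (\<lambda>zs. f (y # zs)) (\<lambda>zs. \<sigma> (y # zs))"
  unfolding has_symbol_def
proof (intro allI impI)
  fix ys :: "'e list" and i assume "length ys = r - 1" "i + 1 < r - 1"
  then show "f (y # ys) + f (y # swap_at i ys) = \<sigma> (y # drop_pair_at i ys) (P (ys ! i) (ys ! (i + 1)))"
    using assms unfolding has_symbol_def
    by (auto simp flip: swap_at_Cons drop_pair_at_Cons dest: spec[of _ "y # ys"] spec[of _ "Suc i"])
qed

lemma has_symbol_head:
  "has_symbol P r f \<sigma> \<Longrightarrow> length ws + 2 = r \<Longrightarrow> f (a # b # ws) + f (b # a # ws) = \<sigma> ws (P a b)"
  unfolding has_symbol_def
  by (auto simp: swap_at_def drop_pair_at_def dest!: spec[of _ "a # b # ws"] spec[of _ 0])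

lemma shuffle_Cons_Cons:
  "shuffle r s f g (a # b # zs) =
     (if 2 \<le> r then shuffle (r - 2) s (\<lambda>zs. f (a # b # zs)) g zs else 0) +
     (if 0 < r \<and> 0 < s then (-1) ^ s * (shuffle (r - 1) (s - 1) (\<lambda>zs. f (a # zs)) (\<lambda>zs. g (b # zs)) zs
        - shuffle (r - 1) (s - 1) (\<lambda>zs. f (b # zs)) (\<lambda>zs. g (a # zs)) zs) else 0) +
     (if 2 \<le> s then shuffle r (s - 2) f (\<lambda>zs. g (a # b # zs)) zs else 0)"
  by (cases r; cases s) (auto simp: algebra_simps)

text \<open>Swapping the first two arguments: the mixed terms, one argument to each factor, cancel.\<close>

lemma shuffle_swap_head:
  "shuffle r s f g (a # b # zs) + shuffle r s f g (b # a # zs) =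
     (if 2 \<le> r then shuffle (r - 2) s (\<lambda>zs. f (a # b # zs) + f (b # a # zs)) g zs else 0) +
     (if 2 \<le> s then shuffle r (s - 2) f (\<lambda>zs. g (a # b # zs) + g (b # a # zs)) zs else 0)"
  unfolding shuffle_Cons_Cons[of r s f g a b zs] shuffle_Cons_Cons[of r s f g b a zs]
    shuffle_add_left shuffle_add_right
  by (cases "2 \<le> r"; cases "2 \<le> s"; cases "0 < r \<and> 0 < s") (auto simp: algebra_simps)

lemma shuffle_symbol_Cons:
  "shuffle_symbol r s f g \<sigma> \<tau> (y # zs) a =
     (if 0 < r then (-1) ^ s * shuffle_symbol (r - 1) s (\<lambda>zs. f (y # zs)) g (\<lambda>zs. \<sigma> (y # zs)) \<tau> zs a else 0) +
     (if 0 < s then shuffle_symbol r (s - 1) f (\<lambda>zs. g (y # zs)) \<sigma> (\<lambda>zs. \<tau> (y # zs)) zs a else 0)"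
  unfolding shuffle_symbol_def
  by (cases r; cases s; cases "r - 1"; cases "s - 1") (auto simp: algebra_simps numeral_2_eq_2)

lemma shuffle_has_symbol_at:
  "has_symbol P r f \<sigma> \<Longrightarrow> has_symbol P s g \<tau> \<Longrightarrow> length ys = r + s \<Longrightarrow> i + 1 < r + s \<Longrightarrow>
   shuffle r s f g ys + shuffle r s f g (swap_at i ys) =
   shuffle_symbol r s f g \<sigma> \<tau> (drop_pair_at i ys) (P (ys ! i) (ys ! (i + 1)))"
proof (induction ys arbitrary: r s f g \<sigma> \<tau> i)
  case Nil then show ?case by simp
next
  case (Cons y ys)
  show ?case
  proof (cases i)
    case 0
    then obtain y' zs where ys: "ys = y' # zs" using Cons.prems by (cases ys) auto
    have swap: "swap_at 0 (y # y' # zs) = y' # y # zs" and drop: "drop_pair_at 0 (y # y' # zs) = zs"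
      by (simp_all add: swap_at_def drop_pair_at_def)
    have "2 \<le> r \<Longrightarrow> shuffle (r - 2) s (\<lambda>zs. f (y # y' # zs) + f (y' # y # zs)) g zs
            = shuffle (r - 2) s (\<lambda>ws. \<sigma> ws (P y y')) g zs"
      and "2 \<le> s \<Longrightarrow> shuffle r (s - 2) f (\<lambda>zs. g (y # y' # zs) + g (y' # y # zs)) zs
            = shuffle r (s - 2) f (\<lambda>ws. \<tau> ws (P y y')) zs"
      by (rule shuffle_cong; use has_symbol_head[OF Cons.prems(1)] has_symbol_head[OF Cons.prems(2)] in auto)+
    then show ?thesis
      unfolding 0 ys swap drop shuffle_swap_head by (simp add: shuffle_symbol_def)
  next
    case (Suc j)
    let ?f = "\<lambda>zs. f (y # zs)" and ?g = "\<lambda>zs. g (y # zs)" and ?P = "P (ys ! j) (ys ! (j + 1))"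
    have len: "length ys = r + s - 1" "j + 1 < r + s - 1" using Cons.prems Suc by auto
    have left: "0 < r \<Longrightarrow> shuffle (r - 1) s ?f g ys + shuffle (r - 1) s ?f g (swap_at j ys)
          = shuffle_symbol (r - 1) s ?f g (\<lambda>zs. \<sigma> (y # zs)) \<tau> (drop_pair_at j ys) ?P"
      by (rule Cons.IH) (use len has_symbol_Cons[OF Cons.prems(1)] Cons.prems(2) in auto)
    have right: "0 < s \<Longrightarrow> shuffle r (s - 1) f ?g ys + shuffle r (s - 1) f ?g (swap_at j ys)
          = shuffle_symbol r (s - 1) f ?g \<sigma> (\<lambda>zs. \<tau> (y # zs)) (drop_pair_at j ys) ?P"
      by (rule Cons.IH) (use len has_symbol_Cons[OF Cons.prems(2)] Cons.prems(1) in auto)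
    have "shuffle r s f g (y # ys) + shuffle r s f g (y # swap_at j ys) =
        (if 0 < r then (-1) ^ s * (shuffle (r - 1) s ?f g ys + shuffle (r - 1) s ?f g (swap_at j ys)) else 0) +
        (if 0 < s then shuffle r (s - 1) f ?g ys + shuffle r (s - 1) f ?g (swap_at j ys) else 0)"
      by (cases "0 < r"; cases "0 < s") (simp_all add: algebra_simps)
    also have "\<dots> = shuffle_symbol r s f g \<sigma> \<tau> (drop_pair_at (Suc j) (y # ys)) ?P"
      unfolding drop_pair_at_Cons shuffle_symbol_Cons using left right by (cases "0 < r"; cases "0 < s") simp_all
    finally show ?thesis unfolding Suc swap_at_Cons by simp
  qed
qed

lemma shuffle_has_symbol:
  "has_symbol P r f \<sigma> \<Longrightarrow> has_symbol P s g \<tau> \<Longrightarrow>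
   has_symbol P (r + s) (shuffle r s f g) (shuffle_symbol r s f g \<sigma> \<tau>)"
  using shuffle_has_symbol_at unfolding has_symbol_def[of P "r + s"] by blast

definition lin_last :: "('a \<Rightarrow> 'e::ab_group_add \<Rightarrow> 'e) \<Rightarrow> nat \<Rightarrow> ('e list \<Rightarrow> 'a::comm_ring_1) \<Rightarrow> bool" where
  "lin_last sm r f \<longleftrightarrow> (\<forall>xs y z a. Suc (length xs) = r \<longrightarrow>
     f (xs @ [y + z]) = f (xs @ [y]) + f (xs @ [z]) \<and> f (xs @ [sm a y]) = a * f (xs @ [y]))"

lemma lin_last_Cons:
  fixes f :: "'e::ab_group_add list \<Rightarrow> 'a::comm_ring_1"
  shows "lin_last sm r f \<Longrightarrow> lin_last sm (r - 1) (\<lambda>zs. f (y # zs))"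
  unfolding lin_last_def
proof (intro allI impI)
  fix xs :: "'e list" and y' z a
  assume lin: "\<forall>xs y z a. Suc (length xs) = r \<longrightarrow>
      f (xs @ [y + z]) = f (xs @ [y]) + f (xs @ [z]) \<and> f (xs @ [sm a y]) = a * f (xs @ [y])"
    and "Suc (length xs) = r - 1"
  then have "Suc (length (y # xs)) = r" by simp
  from lin[rule_format, OF this] show "f (y # xs @ [y' + z]) = f (y # xs @ [y']) + f (y # xs @ [z]) \<and>
      f (y # xs @ [sm a y']) = a * f (y # xs @ [y'])"
    by simp
qed

lemma lin_last_sum:
  "finite K \<Longrightarrow> (\<And>k. k \<in> K \<Longrightarrow> lin_last sm n (F k)) \<Longrightarrow> lin_last sm n (\<lambda>xs. \<Sum>k\<in>K. F k xs)"
  by (induction K rule: finite_induct) (simp_all add: lin_last_def algebra_simps)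

lemma shuffle_lin_last_at:
  "lin_last sm r f \<Longrightarrow> lin_last sm s g \<Longrightarrow> Suc (length xs) = r + s \<Longrightarrow>
   shuffle r s f g (xs @ [y + z]) = shuffle r s f g (xs @ [y]) + shuffle r s f g (xs @ [z]) \<and>
   shuffle r s f g (xs @ [sm a y]) = a * shuffle r s f g (xs @ [y])"
proof (induction xs arbitrary: r s f g)
  case Nil
  have "f [y + z] = f [y] + f [z] \<and> f [sm a y] = a * f [y]" if "r = 1"
    using Nil.prems(1) that unfolding lin_last_def by (auto dest: spec[of _ "[]"])
  moreover have "g [y + z] = g [y] + g [z] \<and> g [sm a y] = a * g [y]" if "s = 1"
    using Nil.prems(2) that unfolding lin_last_def by (auto dest: spec[of _ "[]"])
  moreover have "(r = 1 \<and> s = 0) \<or> (r = 0 \<and> s = 1)" using Nil.prems(3) by auto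
  ultimately show ?case by (auto simp: algebra_simps)
next
  case (Cons x xs)
  let ?f = "\<lambda>zs. f (x # zs)" and ?g = "\<lambda>zs. g (x # zs)"
  have "0 < r \<Longrightarrow> shuffle (r - 1) s ?f g (xs @ [y + z]) =
      shuffle (r - 1) s ?f g (xs @ [y]) + shuffle (r - 1) s ?f g (xs @ [z]) \<and>
      shuffle (r - 1) s ?f g (xs @ [sm a y]) = a * shuffle (r - 1) s ?f g (xs @ [y])"
    by (rule Cons.IH) (use Cons.prems lin_last_Cons in auto)
  moreover have "0 < s \<Longrightarrow> shuffle r (s - 1) f ?g (xs @ [y + z]) =
      shuffle r (s - 1) f ?g (xs @ [y]) + shuffle r (s - 1) f ?g (xs @ [z]) \<and>
      shuffle r (s - 1) f ?g (xs @ [sm a y]) = a * shuffle r (s - 1) f ?g (xs @ [y])"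
    by (rule Cons.IH) (use Cons.prems lin_last_Cons in auto)
  ultimately show ?case by (cases "0 < r"; cases "0 < s") (simp_all add: algebra_simps)
qed

lemma shuffle_lin_last: "lin_last sm r f \<Longrightarrow> lin_last sm s g \<Longrightarrow> lin_last sm (r + s) (shuffle r s f g)"
  using shuffle_lin_last_at unfolding lin_last_def[of sm "r + s"] by blast

lemma multilin_Cons:
  fixes f :: "'e::ab_group_add list \<Rightarrow> 'b::ab_group_add"
  shows "multilin scB scE n f \<Longrightarrow> multilin scB scE (n - 1) (\<lambda>zs. f (y # zs))"
  unfolding multilin_def
proof (intro allI impI)
  fix xs :: "'e list" and i u v k
  assume ml: "\<forall>xs i u v k. length xs = n \<longrightarrow> i < n \<longrightarrow>
      f (xs[i := u + v]) = f (xs[i := u]) + f (xs[i := v]) \<and> f (xs[i := scE k u]) = scB k (f (xs[i := u]))"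
    and "length xs = n - 1" "i < n - 1"
  then have "length (y # xs) = n" "Suc i < n" by simp_all
  from ml[rule_format, OF this] show "f (y # xs[i := u + v]) = f (y # xs[i := u]) + f (y # xs[i := v]) \<and>
      f (y # xs[i := scE k u]) = scB k (f (y # xs[i := u]))"
    by simp
qed

lemma multilin_head:
  "multilin scB scE n f \<Longrightarrow> length zs + 1 = n \<Longrightarrow>
   f ((u + v) # zs) = f (u # zs) + f (v # zs) \<and> f (scE k u # zs) = scB k (f (u # zs))"
  unfolding multilin_def by (drule spec[of _ "u # zs"], drule spec[of _ 0], auto)

lemma multilin_sum:
  fixes \<phi> :: "'r \<Rightarrow> 'a::comm_ring_1"
  shows "finite K \<Longrightarrow> (\<And>k. k \<in> K \<Longrightarrow> multilin (\<lambda>k b. \<phi> k * b) scE n (F k)) \<Longrightarrow>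
    multilin (\<lambda>k b. \<phi> k * b) scE n (\<lambda>xs. \<Sum>k\<in>K. F k xs)"
  by (induction K rule: finite_induct) (simp_all add: multilin_def algebra_simps)

lemma shuffle_multilin_at:
  fixes \<phi> :: "'r \<Rightarrow> 'a::comm_ring_1"
  assumes "multilin (\<lambda>k b. \<phi> k * b) scE r f" "multilin (\<lambda>k b. \<phi> k * b) scE s g"
    and "length xs = r + s" "i < r + s"
  shows "shuffle r s f g (xs[i := u + v]) = shuffle r s f g (xs[i := u]) + shuffle r s f g (xs[i := v]) \<and>
    shuffle r s f g (xs[i := scE k u]) = \<phi> k * shuffle r s f g (xs[i := u])"
  using assms
proof (induction xs arbitrary: r s f g i)
  case Nil then show ?case by simp
next
  case (Cons y ys)
  show ?case
  proof (cases i)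
    case 0
    have "0 < r \<Longrightarrow> shuffle (r - 1) s (\<lambda>zs. f ((u + v) # zs)) g ys =
        shuffle (r - 1) s (\<lambda>zs. f (u # zs) + f (v # zs)) g ys"
      and "0 < r \<Longrightarrow> shuffle (r - 1) s (\<lambda>zs. f (scE k u # zs)) g ys =
        shuffle (r - 1) s (\<lambda>zs. \<phi> k * f (u # zs)) g ys"
      and "0 < s \<Longrightarrow> shuffle r (s - 1) f (\<lambda>zs. g ((u + v) # zs)) ys =
        shuffle r (s - 1) f (\<lambda>zs. g (u # zs) + g (v # zs)) ys"
      and "0 < s \<Longrightarrow> shuffle r (s - 1) f (\<lambda>zs. g (scE k u # zs)) ys =
        shuffle r (s - 1) f (\<lambda>zs. \<phi> k * g (u # zs)) ys"
      by (rule shuffle_cong; use multilin_head[OF Cons.prems(1)] multilin_head[OF Cons.prems(2)] in auto)+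
    then show ?thesis
      by (cases "0 < r"; cases "0 < s")
        (simp_all add: 0 shuffle_add_left shuffle_add_right shuffle_mult_left shuffle_mult_right algebra_simps)
  next
    case (Suc j)
    let ?f = "\<lambda>zs. f (y # zs)" and ?g = "\<lambda>zs. g (y # zs)"
    have "0 < r \<Longrightarrow> shuffle (r - 1) s ?f g (ys[j := u + v]) =
        shuffle (r - 1) s ?f g (ys[j := u]) + shuffle (r - 1) s ?f g (ys[j := v]) \<and>
        shuffle (r - 1) s ?f g (ys[j := scE k u]) = \<phi> k * shuffle (r - 1) s ?f g (ys[j := u])"
      by (rule Cons.IH) (use Cons.prems Suc multilin_Cons in auto)
    moreover have "0 < s \<Longrightarrow> shuffle r (s - 1) f ?g (ys[j := u + v]) =
        shuffle r (s - 1) f ?g (ys[j := u]) + shuffle r (s - 1) f ?g (ys[j := v]) \<and>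
        shuffle r (s - 1) f ?g (ys[j := scE k u]) = \<phi> k * shuffle r (s - 1) f ?g (ys[j := u])"
      by (rule Cons.IH) (use Cons.prems Suc multilin_Cons in auto)
    ultimately show ?thesis
      unfolding Suc by (cases "0 < r"; cases "0 < s") (simp_all add: algebra_simps)
  qed
qed

lemma shuffle_multilin:
  fixes \<phi> :: "'r \<Rightarrow> 'a::comm_ring_1"
  assumes "multilin (\<lambda>k b. \<phi> k * b) scE r f" "multilin (\<lambda>k b. \<phi> k * b) scE s g"
  shows "multilin (\<lambda>k b. \<phi> k * b) scE (r + s) (shuffle r s f g)"
  unfolding multilin_def[of _ _ "r + s"] using shuffle_multilin_at[OF assms] by blast

lemma shuffle_symbol_multilin:
  fixes \<phi> :: "'r \<Rightarrow> 'a::comm_ring_1"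
  assumes "multilin (\<lambda>k b. \<phi> k * b) scE r f" "multilin (\<lambda>k b. \<phi> k * b) scE s g"
    and "multilin (\<lambda>k b. \<phi> k * b) scE (r - 2) (\<lambda>ws. \<sigma> ws a)"
    and "multilin (\<lambda>k b. \<phi> k * b) scE (s - 2) (\<lambda>ws. \<tau> ws a)"
  shows "multilin (\<lambda>k b. \<phi> k * b) scE (r + s - 2) (\<lambda>zs. shuffle_symbol r s f g \<sigma> \<tau> zs a)"
proof -
  have "2 \<le> r \<Longrightarrow> multilin (\<lambda>k b. \<phi> k * b) scE (r + s - 2) (shuffle (r - 2) s (\<lambda>ws. \<sigma> ws a) g)"
    and "2 \<le> s \<Longrightarrow> multilin (\<lambda>k b. \<phi> k * b) scE (r + s - 2) (shuffle r (s - 2) f (\<lambda>ws. \<tau> ws a))"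
    using shuffle_multilin[OF assms(3,2)] shuffle_multilin[OF assms(1,4)] by simp_all
  then show ?thesis
    unfolding shuffle_symbol_def
    by (cases "2 \<le> r"; cases "2 \<le> s") (simp_all add: multilin_def algebra_simps)
qed

lemma is_der_add_eq: "is_der \<iota> D \<Longrightarrow> D (a + b) = D a + D b"
  unfolding is_der_def by blast

lemma is_der_scale_eq: "is_der \<iota> D \<Longrightarrow> D (\<iota> k * a) = \<iota> k * D a"
  unfolding is_der_def by blast

lemma is_der_mult_eq: "is_der \<iota> D \<Longrightarrow> D (a * b) = a * D b + D a * b"
  unfolding is_der_def by blast

lemma is_der_add: "is_der \<iota> D \<Longrightarrow> is_der \<iota> E \<Longrightarrow> is_der \<iota> (\<lambda>a. D a + E a)"
  unfolding is_der_def[of \<iota> "\<lambda>a. D a + E a"]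
  by (simp add: is_der_add_eq is_der_scale_eq is_der_mult_eq ring_distribs)

lemma is_der_sum:
  "finite K \<Longrightarrow> (\<And>k. k \<in> K \<Longrightarrow> is_der \<iota> (D k)) \<Longrightarrow> is_der \<iota> (\<lambda>a. \<Sum>k\<in>K. D k a)"
  by (induction K rule: finite_induct) (simp_all add: is_der_add, simp add: is_der_def)

lemma is_der_mult_const: "is_der \<iota> D \<Longrightarrow> is_der \<iota> (\<lambda>a. c * D a)"
  unfolding is_der_def[of \<iota> "\<lambda>a. c * D a"]
  by (simp add: is_der_add_eq is_der_scale_eq is_der_mult_eq ring_distribs mult.left_commute mult.assoc)

lemma shuffle_is_der_left:
  assumes "\<And>ws. length ws = r \<Longrightarrow> is_der \<iota> (\<sigma> ws)"
  shows "is_der \<iota> (\<lambda>a. shuffle r s (\<lambda>ws. \<sigma> ws a) g zs)"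
proof -
  have "shuffle r s (\<lambda>ws. \<sigma> ws (a + b)) g zs = shuffle r s (\<lambda>ws. \<sigma> ws a + \<sigma> ws b) g zs" for a b
    by (rule shuffle_cong) (simp_all add: is_der_add_eq[OF assms])
  moreover have "shuffle r s (\<lambda>ws. \<sigma> ws (\<iota> k * a)) g zs = shuffle r s (\<lambda>ws. \<iota> k * \<sigma> ws a) g zs" for k a
    by (rule shuffle_cong) (simp_all add: is_der_scale_eq[OF assms])
  moreover have "shuffle r s (\<lambda>ws. \<sigma> ws (a * b)) g zs = shuffle r s (\<lambda>ws. a * \<sigma> ws b + b * \<sigma> ws a) g zs"
    for a b
    by (rule shuffle_cong) (simp_all add: is_der_mult_eq[OF assms] mult.commute)
  ultimately show ?thesis
    unfolding is_der_def by (simp add: shuffle_add_left shuffle_mult_left mult.commute)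
qed

lemma shuffle_symbol_is_der:
  assumes "\<And>ws. length ws + 2 = r \<Longrightarrow> is_der \<iota> (\<sigma> ws)" "\<And>ws. length ws + 2 = s \<Longrightarrow> is_der \<iota> (\<tau> ws)"
  shows "is_der \<iota> (shuffle_symbol r s f g \<sigma> \<tau> zs)"
proof -
  have "2 \<le> r \<Longrightarrow> is_der \<iota> (\<lambda>a. shuffle (r - 2) s (\<lambda>ws. \<sigma> ws a) g zs)"
    using assms(1) by (intro shuffle_is_der_left) auto
  moreover have "2 \<le> s \<Longrightarrow> is_der \<iota> (\<lambda>a. shuffle r (s - 2) f (\<lambda>ws. \<tau> ws a) zs)"
    using shuffle_is_der_left[of "s - 2" \<iota> \<tau> r f zs] assms(2)
    by (auto simp: shuffle_commute[of r] intro: is_der_mult_const)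
  ultimately show ?thesis
    unfolding shuffle_symbol_def[abs_def]
    by (cases "2 \<le> r"; cases "2 \<le> s") (simp_all add: is_der_def algebra_simps)
qed

text \<open>Only meaningful on argument lists of length \<open>n\<close>.\<close>

definition cform :: "('e \<Rightarrow> 'e \<Rightarrow> 'a) \<Rightarrow> ('a::comm_ring_1, 'e::ab_group_add) cdot \<Rightarrow> nat \<Rightarrow> 'e list \<Rightarrow> 'a" where
  "cform B u n ys = (case u of (a, x, c) \<Rightarrow>
     if n = 0 then a else if n = 1 then B x (hd ys) else B (c n (butlast ys)) (last ys))"

text \<open>The inverse of \<open>cform\<close>; \<open>rep\<close> picks the vector representing a linear functional.\<close>

definition of_forms ::
    "(('e \<Rightarrow> 'a) \<Rightarrow> 'e) \<Rightarrow> (nat \<Rightarrow> 'e list \<Rightarrow> 'a) \<Rightarrow> ('a::comm_ring_1, 'e::ab_group_add) cdot" where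
  "of_forms rep P = (P 0 [], rep (\<lambda>y. P 1 [y]),
     \<lambda>n xs. if n < 2 \<or> length xs + 1 \<noteq> n then 0 else rep (\<lambda>y. P n (xs @ [y])))"

definition wedge_form ::
    "('e \<Rightarrow> 'e \<Rightarrow> 'a) \<Rightarrow> ('a::comm_ring_1, 'e::ab_group_add) cdot \<Rightarrow> ('a, 'e) cdot \<Rightarrow> nat \<Rightarrow> 'e list \<Rightarrow> 'a" where
  "wedge_form B u v n ys = (\<Sum>r\<le>n. shuffle r (n - r) (cform B u r) (cform B v (n - r)) ys)"

definition wedge ::
    "('e \<Rightarrow> 'e \<Rightarrow> 'a) \<Rightarrow> ('a::comm_ring_1, 'e::ab_group_add) cdot \<Rightarrow> ('a, 'e) cdot \<Rightarrow> ('a, 'e) cdot" where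
  "wedge B u v = of_forms (inv_into UNIV B) (wedge_form B u v)"

text \<open>Rules out junk values of the components, which \<open>cform\<close> cannot see.\<close>

definition reduced :: "('a::comm_ring_1, 'e::ab_group_add) cdot \<Rightarrow> bool" where
  "reduced u \<longleftrightarrow> (case u of (a, x, c) \<Rightarrow> \<forall>n xs. (n < 2 \<or> length xs + 1 \<noteq> n) \<longrightarrow> c n xs = 0)"

definition form_homog :: "('e \<Rightarrow> 'e \<Rightarrow> 'a) \<Rightarrow> nat \<Rightarrow> ('a::comm_ring_1, 'e::ab_group_add) cdot \<Rightarrow> bool" where
  "form_homog B r u \<longleftrightarrow> (\<forall>r' ys. r' \<noteq> r \<longrightarrow> length ys = r' \<longrightarrow> cform B u r' ys = 0)"

lemma reduced_of_forms: "reduced (of_forms rep P)"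
  unfolding reduced_def of_forms_def by simp

lemma reduced_wedge: "reduced (wedge B u v)"
  unfolding wedge_def by (rule reduced_of_forms)

lemma reduced_cadd: "reduced u \<Longrightarrow> reduced v \<Longrightarrow> reduced (cadd u v)"
  by (cases u; cases v) (simp add: reduced_def cadd_def)

lemma reduced_cbrx: "reduced u \<Longrightarrow> reduced (cbrx B u x)"
  by (cases u) (simp add: reduced_def cbrx_def)

lemma reduced_cA: "reduced (cA a)"
  by (simp add: reduced_def cA_def)

lemma reduced_cE: "reduced (cE x)"
  by (simp add: reduced_def cE_def)

lemma cform_cbrx: "length ys = n \<Longrightarrow> cform B (cbrx B u x) n ys = cform B u (Suc n) (x # ys)"
proof -
  assume l: "length ys = n"
  obtain a y c where u: "u = (a, y, c)" by (cases u) auto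
  consider "n = 0" | "n = 1" | "n \<ge> 2" by linarith
  then show ?thesis
  proof cases
    case 1 then show ?thesis using l by (simp add: u cform_def cbrx_def)
  next
    case 2 then obtain z where "ys = [z]" using l by (cases ys) auto
    then show ?thesis using 2 by (simp add: u cform_def cbrx_def numeral_2_eq_2)
  next
    case 3 then have "ys \<noteq> []" using l by auto
    then show ?thesis using 3 by (simp add: u cform_def cbrx_def)
  qed
qed

lemma form_homog_cbrx: "form_homog B r u \<Longrightarrow> 0 < r \<Longrightarrow> form_homog B (r - 1) (cbrx B u x)"
  unfolding form_homog_def by (auto simp: cform_cbrx)

lemma cform_cbrx_form_homog_0: "form_homog B 0 u \<Longrightarrow> length ys = n \<Longrightarrow> cform B (cbrx B u x) n ys = 0"
  unfolding form_homog_def by (auto simp: cform_cbrx)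

lemma wedge_form_form_homog:
  assumes "form_homog B r u" "form_homog B s v"
  shows "wedge_form B u v n ys = (if n = r + s then shuffle r s (cform B u r) (cform B v s) ys else 0)"
proof -
  let ?w = "if n = r + s then shuffle r s (cform B u r) (cform B v s) ys else 0"
  have "shuffle r' (n - r') (cform B u r') (cform B v (n - r')) ys = (if r' = r then ?w else 0)"
    if "r' \<in> {..n}" for r'
  proof (cases "r' = r")
    case True
    then have "n \<noteq> r + s \<Longrightarrow> n - r' \<noteq> s" using that by auto
    then show ?thesis
      using assms(2) True unfolding form_homog_def by (auto intro!: shuffle_zero_right)
  next
    case False
    then show ?thesis using assms(1) unfolding form_homog_def by (auto intro!: shuffle_zero_left)
  qed
  then have "wedge_form B u v n ys = (\<Sum>r'\<in>{..n}. if r' = r then ?w else 0)"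
    unfolding wedge_form_def by (rule sum.cong[OF refl])
  then show ?thesis by (simp add: sum.delta)
qed

lemma wedge_form_zero_left: "(\<And>r' ys. length ys = r' \<Longrightarrow> cform B u r' ys = 0) \<Longrightarrow> wedge_form B u v n ys = 0"
  unfolding wedge_form_def by (auto intro!: sum.neutral shuffle_zero_left)

lemma wedge_form_zero_right: "(\<And>r' ys. length ys = r' \<Longrightarrow> cform B v r' ys = 0) \<Longrightarrow> wedge_form B u v n ys = 0"
  unfolding wedge_form_def by (auto intro!: sum.neutral shuffle_zero_right)

lemma module_mult: "module ((*) :: 'a::comm_ring_1 \<Rightarrow> 'a \<Rightarrow> 'a)"
  by unfold_locales (simp_all add: algebra_simps)

locale nondeg_form =
  fixes \<iota> :: "'r::comm_ring_1 \<Rightarrow> 'a::comm_ring_1"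
    and sm :: "'a \<Rightarrow> 'e::ab_group_add \<Rightarrow> 'e"
    and B :: "'e \<Rightarrow> 'e \<Rightarrow> 'a"
  assumes hom: "ring_hom_fn \<iota>" and md: "module sm" and sb: "sym_bilinear sm B"
    and nd: "strongly_nondeg sm B"
begin

abbreviation "rep \<equiv> inv_into UNIV B"
abbreviation "R_multilin n f \<equiv> multilin (\<lambda>k b. \<iota> k * b) (\<lambda>k y. sm (\<iota> k) y) n f"

lemma B_sym: "B x y = B y x"
  using sb unfolding sym_bilinear_def by blast

lemma B_add_left: "B (x + y) z = B x z + B y z"
  using sb unfolding sym_bilinear_def by blast

lemma B_scale_left: "B (sm a x) y = a * B x y"
  using sb unfolding sym_bilinear_def by blast

lemma B_add_right: "B x (y + z) = B x y + B x z"
  using sb unfolding sym_bilinear_def by blast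

lemma B_scale_right: "B x (sm a y) = a * B x y"
  using sb unfolding sym_bilinear_def by blast

lemma B_zero_left [simp]: "B 0 y = 0"
  using B_add_left[of 0 0 y] by simp

lemma B_zero_right [simp]: "B x 0 = 0"
  using B_add_right[of x 0 0] by simp

lemma scale_zero_right [simp]: "sm a 0 = 0"
  using md by (rule module.scale_zero_right)

lemma iota_minus_one_power [simp]: "\<iota> ((-1) ^ n) = (-1) ^ n"
proof -
  have add: "\<iota> (x + y) = \<iota> x + \<iota> y" and mult: "\<iota> (x * y) = \<iota> x * \<iota> y" and "\<iota> 1 = 1" for x y
    using hom unfolding ring_hom_fn_def by blast+
  then have "1 + \<iota> (-1) = 0"
    using add[of "-1" 1] add[of 0 0] by simp
  then have "\<iota> (-1) = -1"
    by (simp add: eq_neg_iff_add_eq_0 add.commute)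
  then have "\<iota> (- x) = - \<iota> x" for x
    using mult[of "-1" x] by simp
  then show ?thesis
    using \<open>\<iota> 1 = 1\<close> by (induction n) simp_all
qed

definition A_linear :: "('e \<Rightarrow> 'a) \<Rightarrow> bool" where
  "A_linear \<phi> \<longleftrightarrow> (\<forall>x y. \<phi> (x + y) = \<phi> x + \<phi> y) \<and> (\<forall>a x. \<phi> (sm a x) = a * \<phi> x)"

lemma B_rep: "A_linear \<phi> \<Longrightarrow> B (rep \<phi>) = \<phi>"
proof -
  assume "A_linear \<phi>"
  then have "module_hom sm (*) \<phi>"
    unfolding A_linear_def module_hom_def module_hom_axioms_def using md module_mult by blast
  then have "\<phi> \<in> range B" using nd unfolding strongly_nondeg_def bij_betw_def by simp
  then show ?thesis by (rule f_inv_into_f)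
qed

lemma B_inj: "B x = B y \<Longrightarrow> x = y"
  using nd unfolding strongly_nondeg_def bij_betw_def inj_on_def by blast

lemma B_eqI: "(\<And>z. B x z = B y z) \<Longrightarrow> x = y"
  by (rule B_inj) (rule ext)

lemma rep_zero: "rep (\<lambda>y. 0) = 0"
  using B_rep[of "\<lambda>y. 0"] by (intro B_inj) (simp add: A_linear_def fun_eq_iff)

lemma lin_last_A_linear: "lin_last sm n f \<Longrightarrow> Suc (length xs) = n \<Longrightarrow> A_linear (\<lambda>y. f (xs @ [y]))"
  unfolding lin_last_def A_linear_def by blast

lemma cform_of_forms:
  assumes lin: "\<And>n. lin_last sm n (P n)" and len: "length ys = n"
  shows "cform B (of_forms rep P) n ys = P n ys"
proof -
  consider "n = 0" | "n = 1" | "n \<ge> 2" by linarith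
  then show ?thesis
  proof cases
    case 1 then show ?thesis using len by (simp add: cform_def of_forms_def)
  next
    case 2
    then obtain y where ys: "ys = [y]" using len by (cases ys) auto
    have "A_linear (\<lambda>y. P 1 [y])" using lin_last_A_linear[OF lin[of 1], of "[]"] by simp
    then show ?thesis using 2 ys by (simp add: cform_def of_forms_def B_rep)
  next
    case 3
    then obtain xs y where ys: "ys = xs @ [y]" using len by (cases ys rule: rev_cases) auto
    have "Suc (length xs) = n" using len ys by simp
    then have "A_linear (\<lambda>y. P n (xs @ [y]))" using lin_last_A_linear[OF lin] by blast
    then show ?thesis using 3 ys len by (simp add: cform_def of_forms_def B_rep)
  qed
qed

text \<open>Injectivity of \<open>x \<mapsto> \<langle>x, \<cdot>\<rangle>\<close> recovers every component from the form.\<close>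

lemma reduced_eqI:
  assumes "reduced u" "reduced v" "\<And>n ys. length ys = n \<Longrightarrow> cform B u n ys = cform B v n ys"
  shows "u = v"
proof -
  obtain a x c where u: "u = (a, x, c)" by (cases u) auto
  obtain b y d where v: "v = (b, y, d)" by (cases v) auto
  have "a = b" using assms(3)[of "[]" 0] by (simp add: u v cform_def)
  moreover have "x = y"
    by (rule B_eqI) (use assms(3)[of "[_]" 1] in \<open>simp add: u v cform_def\<close>)
  moreover have "c n xs = d n xs" for n xs
  proof (cases "n < 2 \<or> length xs + 1 \<noteq> n")
    case True then show ?thesis using assms(1,2) by (auto simp: u v reduced_def)
  next
    case False
    show ?thesis
    proof (rule B_eqI)
      fix z
      have "length (xs @ [z]) = n" using False by simp
      from assms(3)[OF this] False show "B (c n xs) z = B (d n xs) z"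
        by (simp add: u v cform_def)
    qed
  qed
  ultimately show ?thesis using u v by auto
qed

lemma reduced_eq_cbrxI:
  assumes "reduced u" "reduced v" "fst u = fst v" "\<And>x. cbrx B u x = cbrx B v x"
  shows "u = v"
proof (rule reduced_eqI[OF assms(1,2)])
  fix n and ys :: "'e list" assume len: "length ys = n"
  show "cform B u n ys = cform B v n ys"
  proof (cases ys)
    case Nil
    then show ?thesis using len assms(3) by (cases u; cases v) (simp add: cform_def)
  next
    case (Cons x zs)
    then have "length zs = n - 1" "n = Suc (n - 1)" using len by auto
    then show ?thesis using cform_cbrx[of zs "n - 1" B _ x] assms(4)[of x] Cons by metis
  qed
qed

lemma reduced_csc: "reduced u \<Longrightarrow> reduced (csc \<iota> sm k u)"
  by (cases u) (simp add: reduced_def csc_def)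

lemma Cdot_reduced:
  assumes "u \<in> Cdot \<iota> sm B"
  shows "reduced u"
proof -
  obtain a x c where u: "u = (a, x, c)" by (cases u) auto
  have "c 0 = (\<lambda>_. 0)" "c 1 = (\<lambda>_. 0)" "\<And>r. r \<ge> 2 \<Longrightarrow> cochain \<iota> sm B r (c r)"
    using assms by (auto simp: Cdot_def u)
  then have "c n xs = 0" if "n < 2 \<or> length xs + 1 \<noteq> n" for n xs
    using that unfolding cochain_def by (cases "n < 2") (auto simp: less_2_cases_iff)
  then show ?thesis unfolding reduced_def u by simp
qed

lemma cform_cA: "cform B (cA a) n ys = (if n = 0 then a else 0)"
  by (simp add: cform_def cA_def)

lemma cform_cE: "cform B (cE x) n ys = (if n = 1 then B x (hd ys) else 0)"
  by (simp add: cform_def cE_def)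

lemma cform_cadd: "cform B (cadd u v) n = (\<lambda>ys. cform B u n ys + cform B v n ys)"
  by (cases u; cases v) (auto simp: cform_def cadd_def B_add_left)

lemma cform_csc: "cform B (csc \<iota> sm k u) n = (\<lambda>ys. \<iota> k * cform B u n ys)"
  by (cases u) (auto simp: cform_def csc_def B_scale_left)

lemma cform_lin_last: "lin_last sm n (cform B u n)"
  unfolding lin_last_def cform_def by (cases u) (auto simp: B_add_right B_scale_right)

lemma wedge_form_lin_last: "lin_last sm n (wedge_form B u v n)"
  unfolding wedge_form_def
proof (rule lin_last_sum)
  fix r assume "r \<in> {..n}"
  have "lin_last sm (r + (n - r)) (shuffle r (n - r) (cform B u r) (cform B v (n - r)))"
    by (rule shuffle_lin_last[OF cform_lin_last cform_lin_last])
  then show "lin_last sm n (shuffle r (n - r) (cform B u r) (cform B v (n - r)))"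
    using \<open>r \<in> {..n}\<close> by simp
qed simp

lemma cform_wedge: "length ys = n \<Longrightarrow> cform B (wedge B u v) n ys = wedge_form B u v n ys"
  unfolding wedge_def by (rule cform_of_forms[OF wedge_form_lin_last])

text \<open>Exactly the forms of elements of \<open>C\<^sup>n(E)\<close>.\<close>

definition admissible :: "nat \<Rightarrow> ('e list \<Rightarrow> 'a) \<Rightarrow> bool" where
  "admissible n f \<longleftrightarrow> R_multilin n f \<and> lin_last sm n f \<and>
     (\<exists>\<sigma>. has_symbol B n f \<sigma> \<and> (\<forall>a. R_multilin (n - 2) (\<lambda>ws. \<sigma> ws a)) \<and>
        (\<forall>ws. length ws + 2 = n \<longrightarrow> is_der \<iota> (\<sigma> ws)))"

lemma admissible_shuffle:
  assumes "admissible r f" "admissible s g"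
  shows "admissible (r + s) (shuffle r s f g)"
proof -
  from assms(1) obtain \<sigma> where f: "R_multilin r f" "lin_last sm r f" "has_symbol B r f \<sigma>"
    "\<And>a. R_multilin (r - 2) (\<lambda>ws. \<sigma> ws a)" "\<And>ws. length ws + 2 = r \<Longrightarrow> is_der \<iota> (\<sigma> ws)"
    unfolding admissible_def by blast
  from assms(2) obtain \<tau> where g: "R_multilin s g" "lin_last sm s g" "has_symbol B s g \<tau>"
    "\<And>a. R_multilin (s - 2) (\<lambda>ws. \<tau> ws a)" "\<And>ws. length ws + 2 = s \<Longrightarrow> is_der \<iota> (\<tau> ws)"
    unfolding admissible_def by blast
  show ?thesis
    unfolding admissible_def
  proof (intro conjI exI[of _ "shuffle_symbol r s f g \<sigma> \<tau>"] allI impI)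
    show "R_multilin (r + s) (shuffle r s f g)" by (rule shuffle_multilin[OF f(1) g(1)])
    show "lin_last sm (r + s) (shuffle r s f g)" by (rule shuffle_lin_last[OF f(2) g(2)])
    show "has_symbol B (r + s) (shuffle r s f g) (shuffle_symbol r s f g \<sigma> \<tau>)"
      by (rule shuffle_has_symbol[OF f(3) g(3)])
    show "R_multilin (r + s - 2) (\<lambda>ws. shuffle_symbol r s f g \<sigma> \<tau> ws a)" for a
      by (rule shuffle_symbol_multilin[OF f(1) g(1) f(4) g(4)])
    show "is_der \<iota> (shuffle_symbol r s f g \<sigma> \<tau> ws)" for ws
      by (rule shuffle_symbol_is_der[OF f(5) g(5)])
  qed
qed

lemma admissible_sum:
  assumes "finite K" "\<And>k. k \<in> K \<Longrightarrow> admissible n (F k)"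
  shows "admissible n (\<lambda>xs. \<Sum>k\<in>K. F k xs)"
proof -
  obtain S where S: "\<And>k. k \<in> K \<Longrightarrow> has_symbol B n (F k) (S k) \<and> (\<forall>a. R_multilin (n - 2) (\<lambda>ws. S k ws a)) \<and>
      (\<forall>ws. length ws + 2 = n \<longrightarrow> is_der \<iota> (S k ws))"
    using assms(2) unfolding admissible_def by metis
  have "has_symbol B n (\<lambda>xs. \<Sum>k\<in>K. F k xs) (\<lambda>zs a. \<Sum>k\<in>K. S k zs a)"
    using S unfolding has_symbol_def by (simp add: sum.distrib[symmetric])
  moreover have "R_multilin (n - 2) (\<lambda>ws. \<Sum>k\<in>K. S k ws a)" for a
    using S by (intro multilin_sum[OF assms(1)]) auto
  moreover have "is_der \<iota> (\<lambda>a. \<Sum>k\<in>K. S k ws a)" if "length ws + 2 = n" for ws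
    using S that by (intro is_der_sum[OF assms(1)]) auto
  moreover have "R_multilin n (\<lambda>xs. \<Sum>k\<in>K. F k xs)" "lin_last sm n (\<lambda>xs. \<Sum>k\<in>K. F k xs)"
    using assms by (auto simp: admissible_def intro!: multilin_sum lin_last_sum)
  ultimately show ?thesis unfolding admissible_def by blast
qed

lemma admissible_wedge_form:
  assumes "\<And>r. admissible r (cform B u r)" "\<And>r. admissible r (cform B v r)"
  shows "admissible n (wedge_form B u v n)"
proof -
  have "admissible n (shuffle r (n - r) (cform B u r) (cform B v (n - r)))" if "r \<le> n" for r
    using admissible_shuffle[OF assms, of r "n - r"] that by simp
  then show ?thesis
    unfolding wedge_form_def[abs_def] by (intro admissible_sum) auto
qed

lemma cochain_form_multilin:
  assumes "cochain \<iota> sm B n C"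
  shows "R_multilin n (\<lambda>ys. B (C (butlast ys)) (last ys))"
  unfolding multilin_def
proof (intro allI impI)
  fix ys :: "'e list" and i :: nat and v w k assume len: "length ys = n" and i: "i < n"
  have n: "2 \<le> n" and C: "multilin (\<lambda>k y. sm (\<iota> k) y) (\<lambda>k y. sm (\<iota> k) y) (n - 1) C"
    using assms unfolding cochain_def by auto
  obtain xs y where ys: "ys = xs @ [y]" using len n by (cases ys rule: rev_cases) auto
  have lx: "length xs = n - 1" using len ys by simp
  show "B (C (butlast (ys[i := v + w]))) (last (ys[i := v + w])) =
      B (C (butlast (ys[i := v]))) (last (ys[i := v])) + B (C (butlast (ys[i := w]))) (last (ys[i := w])) \<and>
    B (C (butlast (ys[i := sm (\<iota> k) v]))) (last (ys[i := sm (\<iota> k) v])) =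
      \<iota> k * B (C (butlast (ys[i := v]))) (last (ys[i := v]))"
  proof (cases "i < n - 1")
    case True
    then have "C (xs[i := v + w]) = C (xs[i := v]) + C (xs[i := w]) \<and>
        C (xs[i := sm (\<iota> k) v]) = sm (\<iota> k) (C (xs[i := v]))"
      using C lx unfolding multilin_def by blast
    then show ?thesis using True lx by (simp add: ys list_update_append B_add_left B_scale_left)
  next
    case False
    then have "i = length xs" using lx i by auto
    then show ?thesis by (simp add: ys list_update_append B_add_right B_scale_right)
  qed
qed

lemma cochain_form_has_symbol:
  assumes "cochain \<iota> sm B n C"
    and s3: "\<And>xs u w. length xs = n - 2 \<Longrightarrow> \<sigma> xs (B u w) = B (C (xs @ [u])) w + B u (C (xs @ [w]))"
    and s4: "\<And>xs i u. length xs = n - 1 \<Longrightarrow> i + 1 < n - 1 \<Longrightarrow>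
      B (C xs + C (xs[i := xs ! (i + 1), i + 1 := xs ! i])) u =
      \<sigma> (take i xs @ drop (i + 2) xs @ [u]) (B (xs ! i) (xs ! (i + 1)))"
  shows "has_symbol B n (\<lambda>ys. B (C (butlast ys)) (last ys)) \<sigma>"
  unfolding has_symbol_def
proof (intro allI impI)
  fix ys :: "'e list" and i assume len: "length ys = n" and i: "i + 1 < n"
  have n: "2 \<le> n" using assms(1) unfolding cochain_def by simp
  show "B (C (butlast ys)) (last ys) + B (C (butlast (swap_at i ys))) (last (swap_at i ys)) =
      \<sigma> (drop_pair_at i ys) (B (ys ! i) (ys ! (i + 1)))"
  proof (cases "i + 1 < n - 1")
    case True
    text \<open>The swapped pair lies inside the arguments of \<open>C\<close>: this is property (2).\<close>
    obtain xs y where ys: "ys = xs @ [y]" using len n by (cases ys rule: rev_cases) auto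
    have lx: "length xs = n - 1" using len ys by simp
    have "B (C xs + C (swap_at i xs)) y = \<sigma> (drop_pair_at i xs @ [y]) (B (xs ! i) (xs ! (i + 1)))"
      using s4[OF lx True, of y] by (simp add: swap_at_def drop_pair_at_def)
    then show ?thesis using True lx by (simp add: ys swap_at_snoc drop_pair_at_snoc nth_append B_add_left)
  next
    case False
    text \<open>The swapped pair involves the last argument: this is property (1).\<close>
    then have i: "i = n - 2" using i by auto
    obtain xs q where "ys = xs @ [q]" using len n by (cases ys rule: rev_cases) auto
    moreover obtain zs p where "xs = zs @ [p]" using len n \<open>ys = xs @ [q]\<close> by (cases xs rule: rev_cases) auto
    ultimately have ys: "ys = zs @ [p, q]" by simp
    have lz: "length zs = n - 2" using len ys by simp
    show ?thesis
      unfolding ys i swap_at_last_pair[OF lz] drop_pair_at_last_pair[OF lz]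
      using s3[OF lz, of p q] lz by (simp add: nth_append butlast_append B_sym[of p])
  qed
qed

lemma admissible_cochain_form:
  assumes "cochain \<iota> sm B n C"
  shows "admissible n (\<lambda>ys. B (C (butlast ys)) (last ys))"
proof -
  from assms obtain \<sigma> where \<sigma>:
    "\<And>a. R_multilin (n - 2) (\<lambda>xs. \<sigma> xs a)" "\<And>xs. length xs = n - 2 \<Longrightarrow> is_der \<iota> (\<sigma> xs)"
    "\<And>xs u w. length xs = n - 2 \<Longrightarrow> \<sigma> xs (B u w) = B (C (xs @ [u])) w + B u (C (xs @ [w]))"
    "\<And>xs i u. length xs = n - 1 \<Longrightarrow> i + 1 < n - 1 \<Longrightarrow>
      B (C xs + C (xs[i := xs ! (i + 1), i + 1 := xs ! i])) u =
      \<sigma> (take i xs @ drop (i + 2) xs @ [u]) (B (xs ! i) (xs ! (i + 1)))"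
    unfolding cochain_def by blast
  show ?thesis
    unfolding admissible_def
  proof (intro conjI exI[of _ \<sigma>] allI impI)
    show "lin_last sm n (\<lambda>ys. B (C (butlast ys)) (last ys))"
      by (simp add: lin_last_def B_add_right B_scale_right)
  qed (use \<sigma> cochain_form_multilin[OF assms] cochain_form_has_symbol[OF assms] in auto)
qed

lemma admissible_cform:
  assumes "u \<in> Cdot \<iota> sm B"
  shows "admissible n (cform B u n)"
proof -
  obtain a x c where u: "u = (a, x, c)" by (cases u) auto
  consider "n = 0" | "n = 1" | "n \<ge> 2" by linarith
  then show ?thesis
  proof cases
    case 1
    show ?thesis unfolding admissible_def 1
      by (intro conjI exI[of _ "\<lambda>_ _. 0"]) (simp_all add: multilin_def lin_last_def has_symbol_def)
  next
    case 2
    have "cform B u 1 = (\<lambda>ys. B x (hd ys))" by (simp add: u cform_def[abs_def])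
    moreover have "R_multilin 1 (\<lambda>ys. B x (hd ys))"
      unfolding multilin_def by (auto simp: B_add_right B_scale_right length_Suc_conv)
    ultimately show ?thesis
      unfolding admissible_def 2
      by (intro conjI exI[of _ "\<lambda>_ _. 0"]) (auto simp: lin_last_def has_symbol_def multilin_def B_add_right B_scale_right)
  next
    case 3
    then have "cochain \<iota> sm B n (c n)" using assms by (simp add: Cdot_def u)
    moreover have "cform B u n = (\<lambda>ys. B (c n (butlast ys)) (last ys))"
      using 3 by (auto simp: u cform_def[abs_def])
    ultimately show ?thesis by (simp add: admissible_cochain_form)
  qed
qed

lemma B_rep_last:
  "lin_last sm n P \<Longrightarrow> length xs + 1 = n \<Longrightarrow> B (rep (\<lambda>y. P (xs @ [y]))) y = P (xs @ [y])"
  using lin_last_A_linear[of n P xs] by (simp add: B_rep)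

lemma rep_last_multilin:
  assumes P: "R_multilin n P" "lin_last sm n P" and n: "2 \<le> n"
  shows "multilin (\<lambda>k y. sm (\<iota> k) y) (\<lambda>k y. sm (\<iota> k) y) (n - 1)
    (\<lambda>xs. if length xs + 1 \<noteq> n then 0 else rep (\<lambda>y. P (xs @ [y])))" (is "multilin _ _ _ ?C")
  unfolding multilin_def
proof (intro allI impI)
  fix xs :: "'e list" and i :: nat and u v k assume len: "length xs = n - 1" and i: "i < n - 1"
  have C: "?C (xs[i := w]) = rep (\<lambda>y. P ((xs @ [y])[i := w]))" for w
    using len i n by (simp add: list_update_append)
  have BC: "B (?C (xs[i := w])) y = P ((xs @ [y])[i := w])" for w y
    using B_rep_last[OF P(2), of "xs[i := w]" y] len i n by (simp add: C list_update_append)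
  have "P ((xs @ [y])[i := u + v]) = P ((xs @ [y])[i := u]) + P ((xs @ [y])[i := v]) \<and>
      P ((xs @ [y])[i := sm (\<iota> k) u]) = \<iota> k * P ((xs @ [y])[i := u])" for y
    using P(1) len i unfolding multilin_def by auto
  then show "?C (xs[i := u + v]) = ?C (xs[i := u]) + ?C (xs[i := v]) \<and>
      ?C (xs[i := sm (\<iota> k) u]) = sm (\<iota> k) (?C (xs[i := u]))"
    by (auto intro!: B_eqI simp only: BC B_add_left B_scale_left)
qed

lemma cochain_of_admissible:
  assumes "admissible n P" and n: "2 \<le> n"
  shows "cochain \<iota> sm B n (\<lambda>xs. if n < 2 \<or> length xs + 1 \<noteq> n then 0 else rep (\<lambda>y. P (xs @ [y])))"
proof -
  define C where "C = (\<lambda>xs. if length xs + 1 \<noteq> n then 0 else rep (\<lambda>y. P (xs @ [y])))"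
  from assms obtain \<sigma> where P: "R_multilin n P" "lin_last sm n P" "has_symbol B n P \<sigma>"
    "\<And>a. R_multilin (n - 2) (\<lambda>ws. \<sigma> ws a)" "\<And>ws. length ws + 2 = n \<Longrightarrow> is_der \<iota> (\<sigma> ws)"
    unfolding admissible_def by blast
  have BC: "B (C xs) y = P (xs @ [y])" if "length xs + 1 = n" for xs y
    using B_rep_last[OF P(2) that] that by (simp add: C_def)
  have "\<sigma> xs (B u w) = B (C (xs @ [u])) w + B u (C (xs @ [w]))" if "length xs = n - 2" for xs u w
  proof -
    have "P (xs @ [u, w]) + P (swap_at (n - 2) (xs @ [u, w])) =
        \<sigma> (drop_pair_at (n - 2) (xs @ [u, w])) (B ((xs @ [u, w]) ! (n - 2)) ((xs @ [u, w]) ! (n - 2 + 1)))"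
      using P(3) that n unfolding has_symbol_def by auto
    then show ?thesis using that n
      by (simp add: swap_at_last_pair drop_pair_at_last_pair nth_append BC B_sym[of u])
  qed
  moreover have "B (C xs + C (xs[i := xs ! (i + 1), i + 1 := xs ! i])) u =
      \<sigma> (take i xs @ drop (i + 2) xs @ [u]) (B (xs ! i) (xs ! (i + 1)))"
    if "length xs = n - 1" "i + 1 < n - 1" for xs i u
  proof -
    have "P (xs @ [u]) + P (swap_at i (xs @ [u])) =
        \<sigma> (drop_pair_at i (xs @ [u])) (B ((xs @ [u]) ! i) ((xs @ [u]) ! (i + 1)))"
      using P(3) that n unfolding has_symbol_def by auto
    then show ?thesis using that n
      by (simp add: swap_at_snoc drop_pair_at_snoc nth_append BC B_add_left)
        (simp add: swap_at_def drop_pair_at_def)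
  qed
  moreover have "multilin (\<lambda>k y. sm (\<iota> k) y) (\<lambda>k y. sm (\<iota> k) y) (n - 1) C"
    unfolding C_def by (rule rep_last_multilin[OF P(1,2) n])
  ultimately have "cochain \<iota> sm B n C"
    unfolding cochain_def using n P(4,5) by (intro conjI exI[of _ \<sigma>]) (auto simp: C_def)
  then show ?thesis using n by (simp add: C_def)
qed

lemma Cdot_cform_eventually_zero:
  assumes "u \<in> Cdot \<iota> sm B"
  obtains N where "\<And>n ys. N \<le> n \<Longrightarrow> cform B u n ys = 0"
proof -
  obtain a x c where u: "u = (a, x, c)" by (cases u) auto
  have fin: "finite {r. c r \<noteq> (\<lambda>_. 0)}" using assms by (simp add: Cdot_def u)
  define N where "N = Max (insert 0 {r. c r \<noteq> (\<lambda>_. 0)}) + 2"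
  have "c n = (\<lambda>_. 0)" if "N \<le> n" for n
  proof (rule ccontr)
    assume "c n \<noteq> (\<lambda>_. 0)"
    then have "n \<le> Max (insert 0 {r. c r \<noteq> (\<lambda>_. 0)})" using fin by (intro Max_ge) auto
    then show False using that by (simp add: N_def)
  qed
  moreover have "2 \<le> n" if "N \<le> n" for n using that by (simp add: N_def)
  ultimately have "cform B u n ys = 0" if "N \<le> n" for n ys
    using that by (force simp: u cform_def)
  then show ?thesis by (rule that)
qed

lemma wedge_form_eventually_zero:
  assumes "u \<in> Cdot \<iota> sm B" "v \<in> Cdot \<iota> sm B"
  obtains N where "\<And>n ys. N \<le> n \<Longrightarrow> wedge_form B u v n ys = 0"
proof -
  obtain Nu where Nu: "\<And>n ys. Nu \<le> n \<Longrightarrow> cform B u n ys = 0"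
    using Cdot_cform_eventually_zero[OF assms(1)] by blast
  obtain Nv where Nv: "\<And>n ys. Nv \<le> n \<Longrightarrow> cform B v n ys = 0"
    using Cdot_cform_eventually_zero[OF assms(2)] by blast
  have "shuffle r (n - r) (cform B u r) (cform B v (n - r)) ys = 0" if "Nu + Nv \<le> n" for n r ys
  proof (cases "Nu \<le> r")
    case True then show ?thesis by (intro shuffle_zero_left) (simp add: Nu)
  next
    case False then show ?thesis using that by (intro shuffle_zero_right) (simp add: Nv)
  qed
  then show ?thesis by (intro that[of "Nu + Nv"]) (simp add: wedge_form_def)
qed

lemma wedge_Cdot:
  assumes "u \<in> Cdot \<iota> sm B" "v \<in> Cdot \<iota> sm B"
  shows "wedge B u v \<in> Cdot \<iota> sm B"
proof -
  let ?c = "\<lambda>n xs. if n < 2 \<or> length xs + 1 \<noteq> n then 0 else rep (\<lambda>y. wedge_form B u v n (xs @ [y]))"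
  obtain N where "\<And>n ys. N \<le> n \<Longrightarrow> wedge_form B u v n ys = 0"
    using wedge_form_eventually_zero[OF assms] by blast
  then have "{n. ?c n \<noteq> (\<lambda>_. 0)} \<subseteq> {..<N}"
    by (auto simp: rep_zero not_less)
  then have "finite {n. ?c n \<noteq> (\<lambda>_. 0)}"
    using finite_subset by blast
  moreover have "admissible n (wedge_form B u v n)" for n
    using admissible_wedge_form admissible_cform assms by blast
  ultimately show ?thesis
    unfolding wedge_def of_forms_def Cdot_def using cochain_of_admissible by auto
qed

lemma wedge_cadd_left: "wedge B (cadd u v) w = cadd (wedge B u w) (wedge B v w)"
  by (rule reduced_eqI)
    (simp_all add: reduced_wedge reduced_cadd cform_wedge cform_cadd wedge_form_def shuffle_add_left sum.distrib)

lemma wedge_cadd_right: "wedge B w (cadd u v) = cadd (wedge B w u) (wedge B w v)"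
  by (rule reduced_eqI)
    (simp_all add: reduced_wedge reduced_cadd cform_wedge cform_cadd wedge_form_def shuffle_add_right sum.distrib)

lemma wedge_csc_left: "wedge B (csc \<iota> sm k u) v = csc \<iota> sm k (wedge B u v)"
  by (rule reduced_eqI)
    (simp_all add: reduced_wedge reduced_csc cform_wedge cform_csc wedge_form_def shuffle_mult_left sum_distrib_left)

lemma wedge_csc_right: "wedge B u (csc \<iota> sm k v) = csc \<iota> sm k (wedge B u v)"
  by (rule reduced_eqI)
    (simp_all add: reduced_wedge reduced_csc cform_wedge cform_csc wedge_form_def shuffle_mult_right sum_distrib_left)

lemma homog_Cdot: "homog \<iota> sm B r u \<Longrightarrow> u \<in> Cdot \<iota> sm B"
  unfolding homog_def by simp

lemma homog_form_homog: "homog \<iota> sm B r u \<Longrightarrow> form_homog B r u"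
  unfolding homog_def form_homog_def cform_def by (cases u) auto

lemma homogI:
  assumes w: "w \<in> Cdot \<iota> sm B" and "form_homog B r w"
  shows "homog \<iota> sm B r w"
proof -
  obtain a x c where w_eq: "w = (a, x, c)" by (cases w) auto
  have zero: "cform B w n ys = 0" if "n \<noteq> r" "length ys = n" for n ys
    using assms(2) that unfolding form_homog_def by blast
  have "r \<noteq> 0 \<longrightarrow> a = 0" using zero[of 0 "[]"] by (auto simp: w_eq cform_def)
  moreover have "r \<noteq> 1 \<longrightarrow> x = 0"
    using zero[of 1 "[_]"] by (auto intro!: B_eqI simp: w_eq cform_def)
  moreover have "c r' xs = 0" if "r' \<noteq> r" for r' xs
  proof (cases "r' < 2 \<or> length xs + 1 \<noteq> r'")
    case True then show ?thesis using Cdot_reduced[OF w] by (auto simp: w_eq reduced_def)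
  next
    case False
    show ?thesis
    proof (rule B_eqI)
      fix y
      have "cform B w r' (xs @ [y]) = 0" using zero that False by simp
      then show "B (c r' xs) y = B 0 y" using False by (simp add: w_eq cform_def)
    qed
  qed
  ultimately show ?thesis unfolding homog_def using w w_eq by auto
qed

lemma cform_wedge_homog:
  "homog \<iota> sm B r u \<Longrightarrow> homog \<iota> sm B s v \<Longrightarrow> length ys = n \<Longrightarrow>
   cform B (wedge B u v) n ys = (if n = r + s then shuffle r s (cform B u r) (cform B v s) ys else 0)"
  by (simp add: cform_wedge wedge_form_form_homog homog_form_homog)

lemma wedge_homog:
  assumes u: "homog \<iota> sm B r u" and v: "homog \<iota> sm B s v"
  shows "homog \<iota> sm B (r + s) (wedge B u v)"
  using u v by (intro homogI) (auto simp: wedge_Cdot homog_Cdot form_homog_def cform_wedge_homog)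

lemma wedge_assoc_homog:
  assumes u: "homog \<iota> sm B r u" and v: "homog \<iota> sm B s v" and w: "homog \<iota> sm B t w"
  shows "wedge B (wedge B u v) w = wedge B u (wedge B v w)"
proof (rule reduced_eqI[OF reduced_wedge reduced_wedge])
  fix n and ys :: "'e list" assume len: "length ys = n"
  have "shuffle (r + s) t (cform B (wedge B u v) (r + s)) (cform B w t) ys =
      shuffle (r + s) t (shuffle r s (cform B u r) (cform B v s)) (cform B w t) ys"
    by (rule shuffle_cong) (simp_all add: cform_wedge_homog[OF u v])
  moreover have "shuffle r (s + t) (cform B u r) (cform B (wedge B v w) (s + t)) ys =
      shuffle r (s + t) (cform B u r) (shuffle s t (cform B v s) (cform B w t)) ys"
    by (rule shuffle_cong) (simp_all add: cform_wedge_homog[OF v w])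
  ultimately show "cform B (wedge B (wedge B u v) w) n ys = cform B (wedge B u (wedge B v w)) n ys"
    by (simp add: cform_wedge_homog[OF wedge_homog[OF u v] w len] cform_wedge_homog[OF u wedge_homog[OF v w] len]
        shuffle_assoc add.assoc)
qed

lemma wedge_commute_homog:
  assumes u: "homog \<iota> sm B r u" and v: "homog \<iota> sm B s v"
  shows "wedge B u v = csc \<iota> sm ((-1) ^ (r * s)) (wedge B v u)"
proof (rule reduced_eqI[OF reduced_wedge reduced_csc[OF reduced_wedge]])
  fix n and ys :: "'e list" assume len: "length ys = n"
  show "cform B (wedge B u v) n ys = cform B (csc \<iota> sm ((-1) ^ (r * s)) (wedge B v u)) n ys"
    by (simp add: cform_csc cform_wedge_homog[OF u v len] cform_wedge_homog[OF v u len]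
        shuffle_commute[of r s] add.commute)
qed

lemma cA_Cdot: "cA a \<in> Cdot \<iota> sm B"
  unfolding Cdot_def cA_def
  by (auto simp: cochain_def multilin_def is_der_def intro!: exI[of _ "\<lambda>_ _. 0"])

lemma cE_Cdot: "cE x \<in> Cdot \<iota> sm B"
  unfolding Cdot_def cE_def
  by (auto simp: cochain_def multilin_def is_der_def intro!: exI[of _ "\<lambda>_ _. 0"])

lemma cA_homog: "homog \<iota> sm B 0 (cA a)"
  by (rule homogI[OF cA_Cdot]) (simp add: form_homog_def cform_cA)

lemma cE_homog: "homog \<iota> sm B 1 (cE x)"
  by (rule homogI[OF cE_Cdot]) (simp add: form_homog_def cform_cE)

lemma wedge_cA_cA: "wedge B (cA a) (cA b) = cA (a * b)"
proof (rule reduced_eqI[OF reduced_wedge reduced_cA])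
  fix n and ys :: "'e list" assume len: "length ys = n"
  show "cform B (wedge B (cA a) (cA b)) n ys = cform B (cA (a * b)) n ys"
    unfolding cform_wedge_homog[OF cA_homog cA_homog len] using len by (cases ys) (simp_all add: cform_cA)
qed

lemma wedge_cA_cE: "wedge B (cA a) (cE x) = cE (sm a x)"
proof (rule reduced_eqI[OF reduced_wedge reduced_cE])
  fix n and ys :: "'e list" assume len: "length ys = n"
  show "cform B (wedge B (cA a) (cE x)) n ys = cform B (cE (sm a x)) n ys"
    unfolding cform_wedge_homog[OF cA_homog cE_homog len] using len
    by (cases ys) (auto simp: cform_cA cform_cE B_scale_left)
qed

lemma wedge_cE_cA: "wedge B (cE x) (cA a) = cE (sm a x)"
proof (rule reduced_eqI[OF reduced_wedge reduced_cE])
  fix n and ys :: "'e list" assume len: "length ys = n"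
  show "cform B (wedge B (cE x) (cA a)) n ys = cform B (cE (sm a x)) n ys"
    unfolding cform_wedge_homog[OF cE_homog cA_homog len] using len
    by (cases ys) (auto simp: cform_cA cform_cE B_scale_left mult.commute)
qed

lemma wedge_form_cbrx_left:
  assumes u: "form_homog B r u" and v: "form_homog B s v" and len: "length ys = n"
  shows "wedge_form B (cbrx B u x) v n ys =
    (if 0 < r \<and> Suc n = r + s then shuffle (r - 1) s (\<lambda>zs. cform B u r (x # zs)) (cform B v s) ys else 0)"
proof (cases "0 < r")
  case True
  have "shuffle (r - 1) s (cform B (cbrx B u x) (r - 1)) (cform B v s) ys =
      shuffle (r - 1) s (\<lambda>zs. cform B u r (x # zs)) (cform B v s) ys"
    by (rule shuffle_cong) (use True in \<open>simp_all add: cform_cbrx\<close>)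
  then show ?thesis
    using True wedge_form_form_homog[OF form_homog_cbrx[OF u True] v] by auto
next
  case False
  then show ?thesis using u by (simp add: wedge_form_zero_left cform_cbrx_form_homog_0)
qed

lemma wedge_form_cbrx_right:
  assumes u: "form_homog B r u" and v: "form_homog B s v" and len: "length ys = n"
  shows "wedge_form B u (cbrx B v x) n ys =
    (if 0 < s \<and> Suc n = r + s then shuffle r (s - 1) (cform B u r) (\<lambda>zs. cform B v s (x # zs)) ys else 0)"
proof (cases "0 < s")
  case True
  have "shuffle r (s - 1) (cform B u r) (cform B (cbrx B v x) (s - 1)) ys =
      shuffle r (s - 1) (cform B u r) (\<lambda>zs. cform B v s (x # zs)) ys"
    by (rule shuffle_cong) (use True in \<open>simp_all add: cform_cbrx\<close>)
  then show ?thesis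
    using True wedge_form_form_homog[OF u form_homog_cbrx[OF v True]] by auto
next
  case False
  then show ?thesis using v by (simp add: wedge_form_zero_right cform_cbrx_form_homog_0)
qed

lemma wedge_cbrx:
  assumes u: "homog \<iota> sm B r u" and v: "homog \<iota> sm B s v"
  shows "cbrx B (wedge B u v) x = cadd (csc \<iota> sm ((-1) ^ s) (wedge B (cbrx B u x) v)) (wedge B u (cbrx B v x))"
proof (rule reduced_eqI)
  show "reduced (cbrx B (wedge B u v) x)"
    by (rule reduced_cbrx[OF reduced_wedge])
  show "reduced (cadd (csc \<iota> sm ((-1) ^ s) (wedge B (cbrx B u x) v)) (wedge B u (cbrx B v x)))"
    by (rule reduced_cadd[OF reduced_csc[OF reduced_wedge] reduced_wedge])
  fix n and ys :: "'e list" assume len: "length ys = n"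
  have fu: "form_homog B r u" and fv: "form_homog B s v"
    using u v by (simp_all add: homog_form_homog)
  have "cform B (cbrx B (wedge B u v) x) n ys =
      (if Suc n = r + s then shuffle r s (cform B u r) (cform B v s) (x # ys) else 0)"
    using len by (simp add: cform_cbrx cform_wedge_homog[OF u v])
  moreover have "cform B (cadd (csc \<iota> sm ((-1) ^ s) (wedge B (cbrx B u x) v)) (wedge B u (cbrx B v x))) n ys =
      (-1) ^ s * wedge_form B (cbrx B u x) v n ys + wedge_form B u (cbrx B v x) n ys"
    using len by (simp add: cform_cadd cform_csc cform_wedge)
  ultimately show "cform B (cbrx B (wedge B u v) x) n ys =
      cform B (cadd (csc \<iota> sm ((-1) ^ s) (wedge B (cbrx B u x) v)) (wedge B u (cbrx B v x))) n ys"
    by (simp add: wedge_form_cbrx_left[OF fu fv len] wedge_form_cbrx_right[OF fu fv len])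
qed

lemma cochain_insert:
  assumes C: "cochain \<iota> sm B (Suc r) C" and r: "2 \<le> r"
  shows "cochain \<iota> sm B r (\<lambda>xs. C (x # xs))"
proof -
  from C obtain \<sigma> where
    z: "\<And>xs. length xs \<noteq> Suc r - 1 \<Longrightarrow> C xs = 0" and
    ml: "multilin (\<lambda>k y. sm (\<iota> k) y) (\<lambda>k y. sm (\<iota> k) y) (Suc r - 1) C" and
    s1: "\<And>a. R_multilin (Suc r - 2) (\<lambda>xs. \<sigma> xs a)" and
    s2: "\<And>xs. length xs = Suc r - 2 \<Longrightarrow> is_der \<iota> (\<sigma> xs)" and
    s3: "\<And>xs u w. length xs = Suc r - 2 \<Longrightarrow> \<sigma> xs (B u w) = B (C (xs @ [u])) w + B u (C (xs @ [w]))" and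
    s4: "\<And>xs i u. length xs = Suc r - 1 \<Longrightarrow> i + 1 < Suc r - 1 \<Longrightarrow>
          B (C xs + C (xs[i := xs ! (i + 1), i + 1 := xs ! i])) u =
          \<sigma> (take i xs @ drop (i + 2) xs @ [u]) (B (xs ! i) (xs ! (i + 1)))"
    unfolding cochain_def by blast
  show ?thesis unfolding cochain_def
  proof (intro conjI exI[of _ "\<lambda>zs. \<sigma> (x # zs)"] allI impI)
    show "2 \<le> r" by (rule r)
    fix xs :: "'e list" assume "length xs \<noteq> r - 1"
    then show "C (x # xs) = 0" using z r by auto
  next
    show "multilin (\<lambda>k y. sm (\<iota> k) y) (\<lambda>k y. sm (\<iota> k) y) (r - 1) (\<lambda>xs. C (x # xs))"
      using multilin_Cons[OF ml] by simp
  next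
    fix a show "R_multilin (r - 2) (\<lambda>xs. \<sigma> (x # xs) a)" using multilin_Cons[OF s1[of a], of x] by (simp add: numeral_2_eq_2)
  next
    fix xs :: "'e list" assume "length xs = r - 2"
    then show "is_der \<iota> (\<sigma> (x # xs))" using s2 r by simp
  next
    fix xs :: "'e list" and u w assume "length xs = r - 2"
    then show "\<sigma> (x # xs) (B u w) = B (C (x # xs @ [u])) w + B u (C (x # xs @ [w]))"
      using s3[of "x # xs" u w] r by simp
  next
    fix xs :: "'e list" and i u assume "length xs = r - 1" "i + 1 < r - 1"
    then show "B (C (x # xs) + C (x # xs[i := xs ! (i + 1), i + 1 := xs ! i])) u =
          \<sigma> (x # take i xs @ drop (i + 2) xs @ [u]) (B (xs ! i) (xs ! (i + 1)))"
      using s4[of "x # xs" "Suc i" u] r by simp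
  qed
qed

lemma cbrx_Cdot:
  assumes "u \<in> Cdot \<iota> sm B"
  shows "cbrx B u x \<in> Cdot \<iota> sm B"
proof -
  obtain a y c where u: "u = (a, y, c)" by (cases u) auto
  have c: "\<And>r. r \<ge> 2 \<Longrightarrow> cochain \<iota> sm B r (c r)" and fin: "finite {r. c r \<noteq> (\<lambda>_. 0)}"
    using assms by (auto simp: Cdot_def u)
  have "{r. (\<lambda>xs. if r < 2 then 0 else c (r + 1) (x # xs)) \<noteq> (\<lambda>_. 0)} \<subseteq> (\<lambda>r. r - 1) ` {r. c r \<noteq> (\<lambda>_. 0)}"
  proof
    fix r assume "r \<in> {r. (\<lambda>xs. if r < 2 then 0 else c (r + 1) (x # xs)) \<noteq> (\<lambda>_. 0)}"
    then have "c (r + 1) \<noteq> (\<lambda>_. 0)" by auto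
    then show "r \<in> (\<lambda>r. r - 1) ` {r. c r \<noteq> (\<lambda>_. 0)}" by (intro image_eqI[of _ _ "r + 1"]) auto
  qed
  then have "finite {r. (\<lambda>xs. if r < 2 then 0 else c (r + 1) (x # xs)) \<noteq> (\<lambda>_. 0)}"
    using fin finite_subset by blast
  then show ?thesis
    unfolding u cbrx_def Cdot_def using cochain_insert c by auto
qed

lemma cbrx_homog: "homog \<iota> sm B r u \<Longrightarrow> 0 < r \<Longrightarrow> homog \<iota> sm B (r - 1) (cbrx B u x)"
  by (rule homogI[OF cbrx_Cdot[OF homog_Cdot] form_homog_cbrx[OF homog_form_homog]])

lemma cbrx_homog_0: "homog \<iota> sm B 0 u \<Longrightarrow> cbrx B u x = cA 0"
  by (cases u) (auto simp: homog_def cbrx_def cA_def fun_eq_iff)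

lemma cochain_zero: "2 \<le> r \<Longrightarrow> cochain \<iota> sm B r (\<lambda>_. 0)"
  unfolding cochain_def by (intro conjI exI[of _ "\<lambda>_ _. 0"]) (simp_all add: multilin_def is_der_def)

definition homog_part :: "nat \<Rightarrow> ('a, 'e) cdot \<Rightarrow> ('a, 'e) cdot" where
  "homog_part n u = (case u of (a, x, c) \<Rightarrow>
     (if n = 0 then a else 0, if n = 1 then x else 0, \<lambda>r. if r = n \<and> 2 \<le> n then c r else (\<lambda>_. 0)))"

fun truncate :: "('a, 'e) cdot \<Rightarrow> nat \<Rightarrow> ('a, 'e) cdot" where
  "truncate u 0 = cA 0"
| "truncate u (Suc N) = cadd (truncate u N) (homog_part N u)"

lemma truncate_eq:
  "truncate u N = (case u of (a, x, c) \<Rightarrow>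
     (if 0 < N then a else 0, if 1 < N then x else 0, \<lambda>r. if r < N \<and> 2 \<le> r then c r else (\<lambda>_. 0)))"
  by (induction N) (cases u, auto simp: cA_def cadd_def homog_part_def fun_eq_iff)+

lemma homog_part_homog:
  assumes "u \<in> Cdot \<iota> sm B"
  shows "homog \<iota> sm B n (homog_part n u)"
proof -
  obtain a x c where u: "u = (a, x, c)" by (cases u) auto
  have "\<And>r. r \<ge> 2 \<Longrightarrow> cochain \<iota> sm B r (c r)" using assms by (auto simp: Cdot_def u)
  moreover have "finite {r. (if r = n \<and> 2 \<le> n then c r else (\<lambda>_. 0)) \<noteq> (\<lambda>_. 0)}"
    by (rule finite_subset[of _ "{n}"]) auto
  ultimately have "homog_part n u \<in> Cdot \<iota> sm B"
    unfolding homog_part_def u Cdot_def using cochain_zero by auto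
  then show ?thesis unfolding homog_def homog_part_def u by auto
qed

lemma truncate_Cdot:
  assumes "u \<in> Cdot \<iota> sm B"
  shows "truncate u N \<in> Cdot \<iota> sm B"
proof -
  obtain a x c where u: "u = (a, x, c)" by (cases u) auto
  have "\<And>r. r \<ge> 2 \<Longrightarrow> cochain \<iota> sm B r (c r)" using assms by (auto simp: Cdot_def u)
  moreover have "finite {r. (if r < N \<and> 2 \<le> r then c r else (\<lambda>_. 0)) \<noteq> (\<lambda>_. 0)}"
    by (rule finite_subset[of _ "{..<N}"]) auto
  ultimately show ?thesis unfolding truncate_eq u Cdot_def using cochain_zero by auto
qed

lemma truncate_eq_self:
  assumes "u \<in> Cdot \<iota> sm B"
  obtains N where "truncate u N = u"
proof -
  obtain a x c where u: "u = (a, x, c)" by (cases u) auto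
  have c01: "c 0 = (\<lambda>_. 0)" "c 1 = (\<lambda>_. 0)" and fin: "finite {r. c r \<noteq> (\<lambda>_. 0)}"
    using assms by (auto simp: Cdot_def u)
  define N where "N = Max (insert 0 {r. c r \<noteq> (\<lambda>_. 0)}) + 2"
  have "c r = (\<lambda>_. 0)" if "N \<le> r" for r
  proof (rule ccontr)
    assume "c r \<noteq> (\<lambda>_. 0)"
    then have "r \<le> Max (insert 0 {r. c r \<noteq> (\<lambda>_. 0)})" using fin by (intro Max_ge) auto
    then show False using that by (simp add: N_def)
  qed
  then have "(\<lambda>r. if r < N \<and> 2 \<le> r then c r else (\<lambda>_. 0)) = c"
    using c01 by (auto simp: fun_eq_iff not_less not_le less_2_cases_iff)
  moreover have "0 < N" "1 < N" by (simp_all add: N_def)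
  ultimately show ?thesis by (intro that[of N]) (simp add: truncate_eq u)
qed

lemma Cdot_induct [consumes 1, case_names homog add]:
  assumes "u \<in> Cdot \<iota> sm B"
    and homog: "\<And>r u. homog \<iota> sm B r u \<Longrightarrow> P u"
    and add: "\<And>u v. u \<in> Cdot \<iota> sm B \<Longrightarrow> v \<in> Cdot \<iota> sm B \<Longrightarrow> P u \<Longrightarrow> P v \<Longrightarrow> P (cadd u v)"
  shows "P u"
proof -
  have "P (truncate u N)" for N
  proof (induction N)
    case 0 show ?case using homog[OF cA_homog] by simp
  next
    case (Suc N)
    have "homog \<iota> sm B N (homog_part N u)" by (rule homog_part_homog[OF assms(1)])
    then show ?case using add[OF truncate_Cdot[OF assms(1)] homog_Cdot Suc homog] by simp
  qed
  then show ?thesis using truncate_eq_self[OF assms(1)] by metis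
qed

lemma wedge_assoc:
  assumes "u \<in> Cdot \<iota> sm B" "v \<in> Cdot \<iota> sm B" "w \<in> Cdot \<iota> sm B"
  shows "wedge B (wedge B u v) w = wedge B u (wedge B v w)"
  using assms(1)
proof (induction rule: Cdot_induct)
  case (homog r u)
  from assms(2) show ?case
  proof (induction rule: Cdot_induct)
    case (homog s v)
    from assms(3) show ?case
    proof (induction rule: Cdot_induct)
      case (homog t w)
      with \<open>homog \<iota> sm B r u\<close> \<open>homog \<iota> sm B s v\<close> show ?case by (rule wedge_assoc_homog)
    qed (simp add: wedge_cadd_right)
  qed (simp add: wedge_cadd_left wedge_cadd_right)
qed (simp add: wedge_cadd_left)

lemma wedge_is_wedge: "is_wedge \<iota> sm B (wedge B)"
  unfolding is_wedge_def
proof (intro conjI ballI allI impI)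
  show "wedge B (cA b) (cA a) = cA (a * b)" for a b
    by (simp add: wedge_cA_cA mult.commute)
  show "wedge B u v = csc \<iota> sm ((-1) ^ (r * s)) (wedge B v u)"
    if "homog \<iota> sm B r u" "homog \<iota> sm B s v" for r s u v
    using that by (rule wedge_commute_homog)
  show "cbrx B (wedge B u v) x = cadd (csc \<iota> sm ((-1) ^ s) (wedge B (cbrx B u x) v)) (wedge B u (cbrx B v x))"
    if "homog \<iota> sm B r u" "homog \<iota> sm B s v" for r s u v x
    using that by (rule wedge_cbrx)
qed (simp_all add: wedge_Cdot wedge_cadd_left wedge_cadd_right wedge_csc_left wedge_csc_right wedge_homog
      wedge_assoc wedge_cA_cA wedge_cA_cE wedge_cE_cA)

lemma is_wedge_cadd_left:
  "is_wedge \<iota> sm B W \<Longrightarrow> u \<in> Cdot \<iota> sm B \<Longrightarrow> v \<in> Cdot \<iota> sm B \<Longrightarrow> w \<in> Cdot \<iota> sm B \<Longrightarrow>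
   W (cadd u v) w = cadd (W u w) (W v w)"
  unfolding is_wedge_def by (elim conjE) blast

lemma is_wedge_cadd_right:
  "is_wedge \<iota> sm B W \<Longrightarrow> u \<in> Cdot \<iota> sm B \<Longrightarrow> v \<in> Cdot \<iota> sm B \<Longrightarrow> w \<in> Cdot \<iota> sm B \<Longrightarrow>
   W w (cadd u v) = cadd (W w u) (W w v)"
  unfolding is_wedge_def by (elim conjE) blast

lemma is_wedge_homog:
  "is_wedge \<iota> sm B W \<Longrightarrow> homog \<iota> sm B r u \<Longrightarrow> homog \<iota> sm B s v \<Longrightarrow> homog \<iota> sm B (r + s) (W u v)"
  unfolding is_wedge_def by blast

lemma is_wedge_cA_cA: "is_wedge \<iota> sm B W \<Longrightarrow> W (cA a) (cA b) = cA (a * b)"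
  unfolding is_wedge_def by blast

lemma is_wedge_cbrx:
  "is_wedge \<iota> sm B W \<Longrightarrow> homog \<iota> sm B r u \<Longrightarrow> homog \<iota> sm B s v \<Longrightarrow>
   cbrx B (W u v) x = cadd (csc \<iota> sm ((-1) ^ s) (W (cbrx B u x) v)) (W u (cbrx B v x))"
  unfolding is_wedge_def by blast

lemma cadd_self_eq_cA_0: "cadd t t = t \<Longrightarrow> t = cA 0"
  by (cases t) (auto simp: cadd_def cA_def fun_eq_iff)

lemma is_wedge_cA_0:
  assumes "is_wedge \<iota> sm B W" "v \<in> Cdot \<iota> sm B"
  shows "W (cA 0) v = cA 0" "W v (cA 0) = cA 0"
proof -
  have "cadd (cA 0) (cA 0) = (cA 0 :: ('a, 'e) cdot)" by (simp add: cadd_def cA_def)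
  then show "W (cA 0) v = cA 0" "W v (cA 0) = cA 0"
    using is_wedge_cadd_left[OF assms(1) cA_Cdot cA_Cdot assms(2)]
      is_wedge_cadd_right[OF assms(1) cA_Cdot cA_Cdot assms(2)] by (metis cadd_self_eq_cA_0)+
qed

lemma homog_0_eq_cA:
  assumes "homog \<iota> sm B 0 u"
  shows "u = cA (fst u)"
proof -
  obtain a x c where u: "u = (a, x, c)" by (cases u) auto
  have "x = 0" "\<And>r. r \<noteq> 0 \<Longrightarrow> c r = (\<lambda>_. 0)" "c 0 = (\<lambda>_. 0)"
    using assms by (auto simp: homog_def u Cdot_def)
  then have "c = (\<lambda>_ _. 0)" by (metis ext)
  then show ?thesis using \<open>x = 0\<close> by (simp add: u cA_def)
qed

lemma is_wedge_eq_wedge_of_cbrx: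
  assumes W: "is_wedge \<iota> sm B W" and u: "homog \<iota> sm B r u" and v: "homog \<iota> sm B s v"
    and "r + s \<noteq> 0"
    and left: "\<And>x. W (cbrx B u x) v = wedge B (cbrx B u x) v"
    and right: "\<And>x. W u (cbrx B v x) = wedge B u (cbrx B v x)"
  shows "W u v = wedge B u v"
proof -
  have Wuv: "homog \<iota> sm B (r + s) (W u v)" and wuv: "homog \<iota> sm B (r + s) (wedge B u v)"
    using is_wedge_homog[OF W u v] wedge_homog[OF u v] .
  show ?thesis
  proof (rule reduced_eq_cbrxI)
    show "reduced (W u v)" "reduced (wedge B u v)"
      using Wuv wuv by (simp_all add: Cdot_reduced homog_Cdot)
    show "fst (W u v) = fst (wedge B u v)"
      using Wuv wuv \<open>r + s \<noteq> 0\<close> by (auto simp: homog_def split: prod.splits)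
    show "cbrx B (W u v) x = cbrx B (wedge B u v) x" for x
      using is_wedge_cbrx[OF W u v] wedge_cbrx[OF u v] left right by simp
  qed
qed

lemma is_wedge_eq_wedge_homog:
  assumes W: "is_wedge \<iota> sm B W" and "homog \<iota> sm B r u" "homog \<iota> sm B s v"
  shows "W u v = wedge B u v"
  using assms(2,3)
proof (induction "r + s" arbitrary: r s u v rule: less_induct)
  case less
  note u = \<open>homog \<iota> sm B r u\<close> and v = \<open>homog \<iota> sm B s v\<close>
  show ?case
  proof (cases "r + s = 0")
    case True
    then have "u = cA (fst u)" "v = cA (fst v)" using u v homog_0_eq_cA by auto
    then show ?thesis using is_wedge_cA_cA[OF W] wedge_cA_cA by metis
  next
    case False
    have "W (cbrx B u x) v = wedge B (cbrx B u x) v" for x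
    proof (cases "0 < r")
      case True
      then have "r - 1 + s < r + s" by simp
      then show ?thesis using less.hyps cbrx_homog[OF u True] v by blast
    next
      case False then show ?thesis
        using u cbrx_homog_0 is_wedge_cA_0[OF W homog_Cdot[OF v]] is_wedge_cA_0[OF wedge_is_wedge homog_Cdot[OF v]]
        by simp
    qed
    moreover have "W u (cbrx B v x) = wedge B u (cbrx B v x)" for x
    proof (cases "0 < s")
      case True
      then have "r + (s - 1) < r + s" by simp
      then show ?thesis using less.hyps cbrx_homog[OF v True] u by blast
    next
      case False then show ?thesis
        using v cbrx_homog_0 is_wedge_cA_0[OF W homog_Cdot[OF u]] is_wedge_cA_0[OF wedge_is_wedge homog_Cdot[OF u]]
        by simp
    qed
    ultimately show ?thesis by (rule is_wedge_eq_wedge_of_cbrx[OF W u v False])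
  qed
qed

lemma is_wedge_eq_wedge:
  assumes W: "is_wedge \<iota> sm B W" and "u \<in> Cdot \<iota> sm B" "v \<in> Cdot \<iota> sm B"
  shows "W u v = wedge B u v"
  using assms(2)
proof (induction rule: Cdot_induct)
  case (homog r u)
  from assms(3) show ?case
  proof (induction rule: Cdot_induct)
    case (homog s v)
    with \<open>homog \<iota> sm B r u\<close> show ?case by (rule is_wedge_eq_wedge_homog[OF W])
  next
    case (add v1 v2)
    then show ?case
      using is_wedge_cadd_right[OF W _ _ homog_Cdot[OF \<open>homog \<iota> sm B r u\<close>]] by (simp add: wedge_cadd_right)
  qed
next
  case (add u1 u2)
  then show ?case using is_wedge_cadd_left[OF W _ _ assms(3)] by (simp add: wedge_cadd_left)
qed

end

theorem mainTheorem7: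
  fixes \<iota> :: "'r::comm_ring_1 \<Rightarrow> 'a::comm_ring_1"
    and sm :: "'a \<Rightarrow> 'e::ab_group_add \<Rightarrow> 'e"
    and B :: "'e \<Rightarrow> 'e \<Rightarrow> 'a"
  assumes "\<exists>\<phi>::rat \<Rightarrow> 'r. ring_hom_fn \<phi> \<and> inj \<phi>"
    and "ring_hom_fn \<iota>"
    and "module sm"
    and "fg_projective sm"
    and "sym_bilinear sm B"
    and "strongly_nondeg sm B"
    and "full_form B"
  shows "\<exists>W. is_wedge \<iota> sm B W \<and>
           (\<forall>W'. is_wedge \<iota> sm B W' \<longrightarrow>
              (\<forall>u\<in>Cdot \<iota> sm B. \<forall>v\<in>Cdot \<iota> sm B. W' u v = W u v))"
proof -
  interpret nondeg_form \<iota> sm B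
    using assms(2,3,5,6) by (simp add: nondeg_form_def)
  show ?thesis
    using wedge_is_wedge is_wedge_eq_wedge by blast
qed

end
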